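(* Assume $X_0\in L^\infty$. For every $\beta\in\mathbb{R}$, $\lambda\ge0$ and $\mu\ge0$, there exists some $m_1(\mu)\in\mathscr{M}_1$ such that $$\inf_{Q\in\mathscr{Q}}K(Q,m_1(\mu),\mu;\beta,\lambda)=\sup_{m\in\mathscr{M}_1}\inf_{Q\in\mathscr{Q}}K(Q,m,\mu;\beta,\lambda)=\inf_{Q\in\mathscr{Q}}\sup_{m\in\mathscr{M}_1}K(Q,m,\mu;\beta,\lambda).$$
   Context: $(\Omega,\mathcal{F},\mathbb{P})$ is a complete nonatomic probability space. $\rho\in L^2$ with $\mathbb{P}(\rho>0)=1$ and $\mathrm{Var}[\rho]>0$. For a random variable $X$, $Q_X(t)=\inf\{y:\mathbb{P}(X\le y)>t\}$ for $t\in[0,1)$; $Q_0:=Q_{X_0}$. $\mathscr{Q}$ is the set of increasing, right-continuous $Q:[0,1)\to\mathbb{R}$ with $\int_0^1Q^2<\infty$, extended by $Q(1)=Q(1-)$. $\mathscr{M}_1$ is the set of increasing right-continuous $m:[0,1]\to[0,\infty)$ with $m(1)=1$, identified with the Borel probability measures on $[0,1]$ (mass $m(0)$ at $0$). For $Q\in\mathscr{Q}$ let $A_Q(0)=Q(1-)$ and $A_Q(s)=\frac1s\int_{1-s}^1Q(t)dt$ for $s\in(0,1]$. Define, for $Q\in\mathscr{Q}$, $m\in\mathscr{M}_1$, $$K(Q,m,\mu;\beta,\lambda)=\int_0^1(Q(s)-\beta)^2ds+\lambda\int_0^1Q(s)Q_\rho(1-s)ds-\mu\int_{[0,1]}A_Q(s)dm(s)+\mu\int_{[0,1]}A_{Q_0}(s)dm(s).$$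 *)

theory Defs
  imports "HOL-Probability.Probability"
begin

definition nonatomic :: "'a measure \<Rightarrow> bool" where
  "nonatomic M \<longleftrightarrow> (\<forall>A\<in>sets M. 0 < measure M A \<longrightarrow>
     (\<exists>B\<in>sets M. B \<subseteq> A \<and> 0 < measure M B \<and> measure M B < measure M A))"

definition quantile :: "'a measure \<Rightarrow> ('a \<Rightarrow> real) \<Rightarrow> real \<Rightarrow> real" where
  "quantile M X t = Inf {y. measure M {\<omega>\<in>space M. X \<omega> \<le> y} > t}"

definition QSet :: "(real \<Rightarrow> real) set" where
  "QSet = {Q. mono_on {0..<1} Q \<and> (\<forall>t\<in>{0..<1}. continuous (at_right t) Q) \<and>
              set_borel_measurable lborel {0..<1} Q \<and>
              set_integrable lborel {0..<1} (\<lambda>t. (Q t)\<^sup>2)}"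

text \<open>The class M_1, identified (as in the paper) with Borel probability measures on [0,1]
  (m(t) = m([0,t])); represented as probability measures on the real Borel sets
  concentrated on [0,1].\<close>
definition M1Set :: "real measure set" where
  "M1Set = {m. sets m = sets borel \<and> prob_space m \<and> emeasure m {0..1} = 1}"

definition AQ :: "(real \<Rightarrow> real) \<Rightarrow> real \<Rightarrow> ereal" where
  "AQ Q s = (if s = 0 then (SUP t\<in>{0..<1}. ereal (Q t))
             else ereal ((1 / s) * (LBINT t=1-s..1. Q t)))"

definition ereal_integral :: "'a measure \<Rightarrow> ('a \<Rightarrow> ereal) \<Rightarrow> ereal" where
  "ereal_integral M f = enn2ereal (\<integral>\<^sup>+ x. e2ennreal (f x) \<partial>M)
                       - enn2ereal (\<integral>\<^sup>+ x. e2ennreal (- f x) \<partial>M)"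

definition Kfun :: "'a measure \<Rightarrow> ('a \<Rightarrow> real) \<Rightarrow> ('a \<Rightarrow> real) \<Rightarrow>
    (real \<Rightarrow> real) \<Rightarrow> real measure \<Rightarrow> real \<Rightarrow> real \<Rightarrow> real \<Rightarrow> ereal" where
  "Kfun P \<rho> X0 Q m \<mu> \<beta> lam =
     ereal ((LBINT s=0..1. (Q s - \<beta>)\<^sup>2) + lam * (LBINT s=0..1. Q s * quantile P \<rho> (1 - s)))
     - ereal \<mu> * ereal_integral m (\<lambda>s. if s \<in> {0..1} then AQ Q s else 0)
     + ereal \<mu> * ereal_integral m (\<lambda>s. if s \<in> {0..1} then AQ (quantile P X0) s else 0)"

end

theory Submission
  imports Defs
begin

text \<open>For a bounded increasing \<open>Q\<close> the tail average \<open>A\<^sub>Q\<close> is continuous on \<open>[0, 1]\<close>, so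
  \<open>m \<mapsto> K(Q, m)\<close> is affine and weakly continuous, while \<open>Q \<mapsto> K(Q, m)\<close> is convex. Identifying a
  probability measure on \<open>[0, 1]\<close> with its moment sequence turns \<open>\<M>\<^sub>1\<close> into a compact convex subset
  of \<open>\<real>\<^sup>\<nat>\<close> (Helly's selection theorem), and Ky Fan's minimax theorem gives one \<open>m\<^sub>1\<close> with
  \<open>K(Q, m\<^sub>1) \<ge> inf\<^sub>Q sup\<^sub>m K\<close> for every bounded \<open>Q\<close>. Truncating an arbitrary \<open>Q\<close> at level \<open>N\<close>
  and letting \<open>N \<rightarrow> \<infinity>\<close> (dominated and monotone convergence) shows that bounded \<open>Q\<close> already
  realise the infimum over \<open>\<Q>\<close>; weak duality closes the chain of equalities.\<close>

section \<open>Ky Fan's theorem for affine functions\<close>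

text \<open>Convexity is expressed through an abstract mixing operation \<open>mix t x y\<close>, read \<open>t x + (1 - t) y\<close>:
  the moment sequences to which the theorem is applied live in \<^typ>\<open>nat \<Rightarrow> real\<close>, which is not
  a vector space instance.\<close>
definition mix_closed :: "(real \<Rightarrow> 'a \<Rightarrow> 'a \<Rightarrow> 'a) \<Rightarrow> 'a set \<Rightarrow> bool" where
  "mix_closed mix X \<longleftrightarrow> (\<forall>x\<in>X. \<forall>y\<in>X. \<forall>t\<in>{0..1}. mix t x y \<in> X)"

definition mix_affine :: "(real \<Rightarrow> 'a \<Rightarrow> 'a \<Rightarrow> 'a) \<Rightarrow> 'a set \<Rightarrow> ('a \<Rightarrow> real) \<Rightarrow> bool" where
  "mix_affine mix X f \<longleftrightarrow> (\<forall>x\<in>X. \<forall>y\<in>X. \<forall>t\<in>{0..1}. f (mix t x y) = t * f x + (1 - t) * f y)"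

lemma mix_affine_subset: "mix_affine mix X f \<Longrightarrow> Y \<subseteq> X \<Longrightarrow> mix_affine mix Y f"
  unfolding mix_affine_def by blast

lemma mix_affine_sum:
  assumes "\<And>\<psi>. \<psi> \<in> \<Psi> \<Longrightarrow> mix_affine mix X \<psi>"
  shows "mix_affine mix X (\<lambda>x. \<Sum>\<psi>\<in>\<Psi>. w \<psi> * \<psi> x)"
  unfolding mix_affine_def
proof (intro ballI)
  fix x y t assume xy: "x \<in> X" "y \<in> X" "t \<in> {0..1::real}"
  have "(\<Sum>\<psi>\<in>\<Psi>. w \<psi> * \<psi> (mix t x y)) = (\<Sum>\<psi>\<in>\<Psi>. t * (w \<psi> * \<psi> x) + (1 - t) * (w \<psi> * \<psi> y))"
  proof (rule sum.cong)
    fix \<psi> assume "\<psi> \<in> \<Psi>"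
    then have "\<psi> (mix t x y) = t * \<psi> x + (1 - t) * \<psi> y" using assms xy unfolding mix_affine_def by blast
    then show "w \<psi> * \<psi> (mix t x y) = t * (w \<psi> * \<psi> x) + (1 - t) * (w \<psi> * \<psi> y)"
      by (simp only:) (simp add: algebra_simps)
  qed simp
  then show "(\<Sum>\<psi>\<in>\<Psi>. w \<psi> * \<psi> (mix t x y)) = t * (\<Sum>\<psi>\<in>\<Psi>. w \<psi> * \<psi> x) + (1 - t) * (\<Sum>\<psi>\<in>\<Psi>. w \<psi> * \<psi> y)"
    by (simp add: sum.distrib sum_distrib_left)
qed

lemma mix_closed_superlevel:
  assumes "mix_closed mix X" and "mix_affine mix X \<phi>"
  shows "mix_closed mix {x\<in>X. c \<le> \<phi> x}"
  unfolding mix_closed_def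
proof (intro ballI)
  fix x y and t :: real assume x: "x \<in> {x\<in>X. c \<le> \<phi> x}" and y: "y \<in> {x\<in>X. c \<le> \<phi> x}" and t: "t \<in> {0..1}"
  have "t * c + (1 - t) * c \<le> t * \<phi> x + (1 - t) * \<phi> y"
    using x y t by (intro add_mono mult_left_mono) auto
  moreover have "\<phi> (mix t x y) = t * \<phi> x + (1 - t) * \<phi> y"
    using assms(2) x y t unfolding mix_affine_def by blast
  moreover have "mix t x y \<in> X" using assms(1) x y t unfolding mix_closed_def by blast
  ultimately show "mix t x y \<in> {x\<in>X. c \<le> \<phi> x}" by (simp add: algebra_simps)
qed

lemma mix_affine_pair_hypograph_convex:
  assumes mix: "mix_closed mix X" and \<psi>: "mix_affine mix X \<psi>" and \<phi>: "mix_affine mix X \<phi>"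
  shows "convex {p::real \<times> real. \<exists>x\<in>X. fst p \<le> \<psi> x \<and> snd p \<le> \<phi> x}"
  unfolding convex_def
proof (intro ballI allI impI)
  fix p q :: "real \<times> real" and u v :: real
  assume "p \<in> {p. \<exists>x\<in>X. fst p \<le> \<psi> x \<and> snd p \<le> \<phi> x}" "q \<in> {p. \<exists>x\<in>X. fst p \<le> \<psi> x \<and> snd p \<le> \<phi> x}"
    and uv: "0 \<le> u" "0 \<le> v" "u + v = 1"
  then obtain x y where x: "x \<in> X" "fst p \<le> \<psi> x" "snd p \<le> \<phi> x" and y: "y \<in> X" "fst q \<le> \<psi> y" "snd q \<le> \<phi> y"
    by auto
  have u: "u \<in> {0..1}" and v: "v = 1 - u" using uv by auto
  have "u * fst p + v * fst q \<le> \<psi> (mix u x y)" "u * snd p + v * snd q \<le> \<phi> (mix u x y)"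
    using \<psi> \<phi> x y u uv unfolding mix_affine_def v by (auto intro!: add_mono mult_left_mono)
  moreover have "mix u x y \<in> X" using mix x y u unfolding mix_closed_def by auto
  ultimately show "u *\<^sub>R p + v *\<^sub>R q \<in> {p. \<exists>x\<in>X. fst p \<le> \<psi> x \<and> snd p \<le> \<phi> x}" by auto
qed

lemma quadrant_separation_coeffs:
  fixes a1 a2 b c :: real
  assumes sep: "\<And>d1 d2. d1 > 0 \<Longrightarrow> d2 > 0 \<Longrightarrow> b \<le> a1 * (c + d1) + a2 * (c + d2)"
  shows "0 \<le> a1" and "0 \<le> a2" and "b \<le> (a1 + a2) * c"
proof -
  have unbounded: "0 \<le> a" if "\<And>d. d > 0 \<Longrightarrow> K \<le> a * d" for a K :: real
  proof (rule ccontr)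
    assume "\<not> 0 \<le> a"
    define d where "d = (\<bar>K\<bar> + 1) / - a"
    have "d > 0" and "a * d = - (\<bar>K\<bar> + 1)"
      using \<open>\<not> 0 \<le> a\<close> by (auto simp: d_def field_simps)
    then show False using that[of d] abs_ge_minus_self[of K] by linarith
  qed
  show a1: "0 \<le> a1"
    by (rule unbounded[of "b - a1 * c - a2 * (c + 1)"]) (use sep[of _ 1] in \<open>auto simp: algebra_simps\<close>)
  show a2: "0 \<le> a2"
    by (rule unbounded[of "b - a1 * (c + 1) - a2 * c"]) (use sep[of 1] in \<open>auto simp: algebra_simps\<close>)
  show "b \<le> (a1 + a2) * c"
  proof (rule field_le_epsilon)
    fix e :: real assume e: "0 < e"
    define d where "d = e / (a1 + a2 + 1)"
    have "d > 0" "(a1 + a2) * d \<le> e"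
      using a1 a2 e by (auto simp: d_def field_simps)
    then show "b \<le> (a1 + a2) * c + e" using sep[of d d] by (simp add: algebra_simps)
  qed
qed

text \<open>The two-function case of Ky Fan's theorem: separate the hypograph of \<open>(\<psi>, \<phi>)\<close> from the open
  quadrant above \<open>(c - e, c - e)\<close>; the normal of the separating line is a pair of nonnegative
  weights at which the hypothesis fails.\<close>
lemma mix_affine_pair_near_level:
  fixes \<psi> \<phi> :: "'a \<Rightarrow> real"
  assumes mix: "mix_closed mix X" and \<psi>: "mix_affine mix X \<psi>" and \<phi>: "mix_affine mix X \<phi>"
    and level: "\<And>t. t \<in> {0..1} \<Longrightarrow> \<exists>x\<in>X. c \<le> t * \<psi> x + (1 - t) * \<phi> x"
    and e: "e > 0"
  shows "\<exists>x\<in>X. c - e < \<psi> x \<and> c - e < \<phi> x"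
proof (rule ccontr)
  assume none: "\<not> ?thesis"
  define S where "S = {p::real \<times> real. \<exists>x\<in>X. fst p \<le> \<psi> x \<and> snd p \<le> \<phi> x}"
  define U where "U = {c - e<..} \<times> {c - e<..}"
  obtain x0 where "x0 \<in> X" using level[of 0] by auto
  then have "(\<psi> x0, \<phi> x0) \<in> S" unfolding S_def by auto
  moreover have "(c, c) \<in> U" unfolding U_def using e by auto
  moreover have "S \<inter> U = {}" using none unfolding S_def U_def by force
  moreover have "convex S" unfolding S_def by (rule mix_affine_pair_hypograph_convex[OF mix \<psi> \<phi>])
  moreover have "convex U" unfolding U_def by (intro convex_Times convex_real_interval)
  ultimately obtain a b where "a \<noteq> 0" and below: "\<forall>p\<in>S. inner a p \<le> b" and above: "\<forall>p\<in>U. b \<le> inner a p"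
    using separating_hyperplane_sets[of S U] by blast
  obtain a1 a2 where a: "a = (a1, a2)" by (cases a)
  have "b \<le> a1 * (c - e + d1) + a2 * (c - e + d2)" if "d1 > 0" "d2 > 0" for d1 d2
    using above[rule_format, of "(c - e + d1, c - e + d2)"] that unfolding U_def a by auto
  note coeffs = quadrant_separation_coeffs[OF this]
  have pos: "a1 + a2 > 0" using coeffs(1,2) \<open>a \<noteq> 0\<close> a by (auto simp: zero_prod_def)
  define t where "t = a1 / (a1 + a2)"
  have "t \<in> {0..1}" using coeffs(1,2) pos by (auto simp: t_def)
  then obtain x where "x \<in> X" and x: "c \<le> t * \<psi> x + (1 - t) * \<phi> x" using level by blast
  then have "a1 * \<psi> x + a2 * \<phi> x \<le> b" using below unfolding S_def a by auto
  then have "a1 * \<psi> x + a2 * \<phi> x \<le> (a1 + a2) * (c - e)" using coeffs(3) by linarith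
  moreover have "(a1 + a2) * (t * \<psi> x + (1 - t) * \<phi> x) = a1 * \<psi> x + a2 * \<phi> x"
  proof -
    have "(a1 + a2) * t = a1" "(a1 + a2) * (1 - t) = a2" using pos by (auto simp: t_def field_simps)
    then show ?thesis by (metis distrib_left mult.assoc)
  qed
  ultimately have "(a1 + a2) * (t * \<psi> x + (1 - t) * \<phi> x) \<le> (a1 + a2) * (c - e)" by simp
  then have "t * \<psi> x + (1 - t) * \<phi> x \<le> c - e" using pos by (simp add: mult_le_cancel_left_pos)
  then show False using x e by linarith
qed

lemma mix_affine_pair_common_level:
  fixes \<psi> \<phi> :: "'a::topological_space \<Rightarrow> real"
  assumes "compact X" and mix: "mix_closed mix X" and "mix_affine mix X \<psi>" and "mix_affine mix X \<phi>"
    and "continuous_on X \<psi>" and "continuous_on X \<phi>"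
    and level: "\<And>t. t \<in> {0..1} \<Longrightarrow> \<exists>x\<in>X. c \<le> t * \<psi> x + (1 - t) * \<phi> x"
  shows "\<exists>x\<in>X. c \<le> \<psi> x \<and> c \<le> \<phi> x"
proof -
  have "X \<noteq> {}" using level[of 0] by auto
  moreover have "continuous_on X (\<lambda>x. min (\<psi> x) (\<phi> x))" using assms by (intro continuous_intros)
  ultimately obtain x0 where "x0 \<in> X" and max: "\<And>y. y \<in> X \<Longrightarrow> min (\<psi> y) (\<phi> y) \<le> min (\<psi> x0) (\<phi> x0)"
    using continuous_attains_sup[OF \<open>compact X\<close>] by blast
  have "c \<le> min (\<psi> x0) (\<phi> x0)"
  proof (rule ccontr)
    assume "\<not> ?thesis"
    then have "c - min (\<psi> x0) (\<phi> x0) > 0" by linarith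
    from mix_affine_pair_near_level[OF mix assms(3,4) level this]
    obtain y where "y \<in> X" "min (\<psi> x0) (\<phi> x0) < min (\<psi> y) (\<phi> y)" by auto
    then show False using max[of y] by linarith
  qed
  then show ?thesis using \<open>x0 \<in> X\<close> by auto
qed

lemma sum_insert_rescaled_weights:
  fixes f w :: "'b \<Rightarrow> real"
  assumes "finite \<Phi>" and "\<phi> \<notin> \<Phi>"
  shows "(\<Sum>\<psi>\<in>insert \<phi> \<Phi>. (if \<psi> = \<phi> then 1 - t else t * w \<psi>) * f \<psi>)
      = t * (\<Sum>\<psi>\<in>\<Phi>. w \<psi> * f \<psi>) + (1 - t) * f \<phi>"
    and "(\<Sum>\<psi>\<in>insert \<phi> \<Phi>. if \<psi> = \<phi> then 1 - t else t * w \<psi>) = 1 - t + t * sum w \<Phi>"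
proof -
  have "(\<Sum>\<psi>\<in>\<Phi>. (if \<psi> = \<phi> then 1 - t else t * w \<psi>) * f \<psi>) = (\<Sum>\<psi>\<in>\<Phi>. t * (w \<psi> * f \<psi>))"
    using assms(2) by (intro sum.cong) auto
  then show "(\<Sum>\<psi>\<in>insert \<phi> \<Phi>. (if \<psi> = \<phi> then 1 - t else t * w \<psi>) * f \<psi>)
      = t * (\<Sum>\<psi>\<in>\<Phi>. w \<psi> * f \<psi>) + (1 - t) * f \<phi>"
    using assms by (simp add: sum_distrib_left)
  have "(\<Sum>\<psi>\<in>\<Phi>. if \<psi> = \<phi> then 1 - t else t * w \<psi>) = (\<Sum>\<psi>\<in>\<Phi>. t * w \<psi>)"
    using assms(2) by (intro sum.cong) auto
  then show "(\<Sum>\<psi>\<in>insert \<phi> \<Phi>. if \<psi> = \<phi> then 1 - t else t * w \<psi>) = 1 - t + t * sum w \<Phi>"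
    using assms by (simp add: sum_distrib_left)
qed

text \<open>Induction on the finite family: the superlevel set \<open>{x. c \<le> \<phi> x}\<close> of the new function
  inherits the hypotheses for the remaining ones by the two-function case.\<close>
lemma mix_affine_finite_common_level:
  fixes \<Phi> :: "('a::t2_space \<Rightarrow> real) set"
  assumes "finite \<Phi>" and "compact X" and "X \<noteq> {}" and "mix_closed mix X"
    and "\<And>\<phi>. \<phi> \<in> \<Phi> \<Longrightarrow> continuous_on X \<phi> \<and> mix_affine mix X \<phi>"
    and "\<And>w. \<forall>\<phi>\<in>\<Phi>. 0 \<le> w \<phi> \<Longrightarrow> sum w \<Phi> = 1 \<Longrightarrow> \<exists>x\<in>X. c \<le> (\<Sum>\<phi>\<in>\<Phi>. w \<phi> * \<phi> x)"
  shows "\<exists>x\<in>X. \<forall>\<phi>\<in>\<Phi>. c \<le> \<phi> x"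
  using assms
proof (induction \<Phi> arbitrary: X rule: finite_induct)
  case empty
  then show ?case by auto
next
  case (insert \<phi> \<Phi>)
  note cont_aff = insert.prems(4)
  define X' where "X' = {x\<in>X. c \<le> \<phi> x}"
  have sub: "X' \<subseteq> X" unfolding X'_def by auto
  have level: "\<exists>x\<in>X. c \<le> t * (\<Sum>\<psi>\<in>\<Phi>. w \<psi> * \<psi> x) + (1 - t) * \<phi> x"
    if "t \<in> {0..1}" "\<forall>\<psi>\<in>\<Phi>. 0 \<le> w \<psi>" "sum w \<Phi> = 1 \<or> t = 0" for t w
    using insert.prems(5)[of "\<lambda>\<psi>. if \<psi> = \<phi> then 1 - t else t * w \<psi>"] that
    by (auto simp: sum_insert_rescaled_weights[OF insert.hyps])
  have "closed X'" unfolding X'_def using cont_aff[of \<phi>] compact_imp_closed[OF insert.prems(1)]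
    by (intro continuous_on_closed_Collect_le) auto
  then have "compact X'" using compact_Int_closed[OF insert.prems(1)] sub by (metis Int_absorb1)
  moreover have "X' \<noteq> {}" using level[of 0 "\<lambda>_. 0"] unfolding X'_def by auto
  moreover have "mix_closed mix X'"
    unfolding X'_def using insert.prems(3) cont_aff by (intro mix_closed_superlevel) auto
  moreover have "continuous_on X' \<psi> \<and> mix_affine mix X' \<psi>" if "\<psi> \<in> \<Phi>" for \<psi>
    using cont_aff[of \<psi>] that sub by (auto intro: continuous_on_subset mix_affine_subset)
  moreover have "\<exists>x\<in>X'. c \<le> (\<Sum>\<psi>\<in>\<Phi>. w \<psi> * \<psi> x)" if "\<forall>\<psi>\<in>\<Phi>. 0 \<le> w \<psi>" "sum w \<Phi> = 1" for w
  proof -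
    have "\<exists>x\<in>X. c \<le> (\<Sum>\<psi>\<in>\<Phi>. w \<psi> * \<psi> x) \<and> c \<le> \<phi> x"
    proof (rule mix_affine_pair_common_level)
      show "mix_affine mix X (\<lambda>x. \<Sum>\<psi>\<in>\<Phi>. w \<psi> * \<psi> x)" using cont_aff by (intro mix_affine_sum) auto
      show "continuous_on X (\<lambda>x. \<Sum>\<psi>\<in>\<Phi>. w \<psi> * \<psi> x)" using cont_aff by (intro continuous_intros) auto
    qed (use insert.prems cont_aff level that in auto)
    then show ?thesis unfolding X'_def by auto
  qed
  ultimately obtain x where "x \<in> X'" "\<forall>\<psi>\<in>\<Phi>. c \<le> \<psi> x" using insert.IH by blast
  then show ?case unfolding X'_def by auto
qed

lemma convex_like_below_combination:
  fixes \<Phi> :: "('a \<Rightarrow> real) set"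
  assumes "finite \<Psi>" and "\<Psi> \<subseteq> \<Phi>"
    and convex_like: "\<And>\<phi>1 \<phi>2 t. \<phi>1 \<in> \<Phi> \<Longrightarrow> \<phi>2 \<in> \<Phi> \<Longrightarrow> t \<in> {0..1} \<Longrightarrow>
        \<exists>\<phi>\<in>\<Phi>. \<forall>x\<in>X. \<phi> x \<le> t * \<phi>1 x + (1 - t) * \<phi>2 x"
    and "\<forall>\<psi>\<in>\<Psi>. 0 \<le> w \<psi>" and "sum w \<Psi> = 1"
  shows "\<exists>\<phi>\<in>\<Phi>. \<forall>x\<in>X. \<phi> x \<le> (\<Sum>\<psi>\<in>\<Psi>. w \<psi> * \<psi> x)"
  using assms(1,2,4,5)
proof (induction \<Psi> arbitrary: w rule: finite_induct)
  case empty
  then show ?case by simp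
next
  case (insert \<phi> \<Psi>)
  have split: "w \<phi> + sum w \<Psi> = 1" and sum_insert: "(\<Sum>\<psi>\<in>insert \<phi> \<Psi>. w \<psi> * \<psi> x) = w \<phi> * \<phi> x + (\<Sum>\<psi>\<in>\<Psi>. w \<psi> * \<psi> x)" for x
    using insert.hyps insert.prems(3) by simp_all
  have "0 \<le> sum w \<Psi>" using insert.prems(2) by (intro sum_nonneg) auto
  show ?case
  proof (cases "sum w \<Psi> = 0")
    case True
    then have "\<forall>\<psi>\<in>\<Psi>. w \<psi> = 0" using sum_nonneg_eq_0_iff[OF insert.hyps(1)] insert.prems(2) by blast
    then have "(\<Sum>\<psi>\<in>insert \<phi> \<Psi>. w \<psi> * \<psi> x) = \<phi> x" for x using split True sum_insert[of x] by simp
    moreover have "\<phi> \<in> \<Phi>" using insert.prems(1) by simp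
    ultimately show ?thesis by auto
  next
    case False
    with \<open>0 \<le> sum w \<Psi>\<close> have pos: "0 < sum w \<Psi>" by simp
    have "\<exists>\<phi>'\<in>\<Phi>. \<forall>x\<in>X. \<phi>' x \<le> (\<Sum>\<psi>\<in>\<Psi>. w \<psi> / sum w \<Psi> * \<psi> x)"
    proof (rule insert.IH)
      show "\<Psi> \<subseteq> \<Phi>" and "\<forall>\<psi>\<in>\<Psi>. 0 \<le> w \<psi> / sum w \<Psi>" using insert.prems(1,2) pos by simp_all
      show "(\<Sum>\<psi>\<in>\<Psi>. w \<psi> / sum w \<Psi>) = 1" using pos by (simp add: sum_divide_distrib[symmetric])
    qed
    then obtain \<phi>' where "\<phi>' \<in> \<Phi>" and \<phi>': "\<And>x. x \<in> X \<Longrightarrow> \<phi>' x \<le> (\<Sum>\<psi>\<in>\<Psi>. w \<psi> / sum w \<Psi> * \<psi> x)"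
      by blast
    have "w \<phi> \<in> {0..1}" using insert.prems(2) split \<open>0 \<le> sum w \<Psi>\<close> by simp
    moreover have "\<phi> \<in> \<Phi>" using insert.prems(1) by simp
    ultimately obtain \<phi>0 where "\<phi>0 \<in> \<Phi>" and \<phi>0: "\<And>x. x \<in> X \<Longrightarrow> \<phi>0 x \<le> w \<phi> * \<phi> x + (1 - w \<phi>) * \<phi>' x"
      using convex_like \<open>\<phi>' \<in> \<Phi>\<close> by blast
    have "\<phi>0 x \<le> (\<Sum>\<psi>\<in>insert \<phi> \<Psi>. w \<psi> * \<psi> x)" if "x \<in> X" for x
    proof -
      have "(1 - w \<phi>) * \<phi>' x = sum w \<Psi> * \<phi>' x" using split by simp
      also have "\<dots> \<le> sum w \<Psi> * (\<Sum>\<psi>\<in>\<Psi>. w \<psi> / sum w \<Psi> * \<psi> x)"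
        using \<phi>'[OF that] pos by (intro mult_left_mono) auto
      also have "\<dots> = (\<Sum>\<psi>\<in>\<Psi>. w \<psi> * \<psi> x)" using pos by (simp add: sum_distrib_left)
      finally show ?thesis using \<phi>0[OF that] sum_insert[of x] by linarith
    qed
    then show ?thesis using \<open>\<phi>0 \<in> \<Phi>\<close> by blast
  qed
qed

theorem ky_fan_common_level:
  fixes X :: "'a::t2_space set" and \<Phi> :: "('a \<Rightarrow> real) set"
  assumes "compact X" and "X \<noteq> {}" and "mix_closed mix X"
    and cont_aff: "\<And>\<phi>. \<phi> \<in> \<Phi> \<Longrightarrow> continuous_on X \<phi> \<and> mix_affine mix X \<phi>"
    and convex_like: "\<And>\<phi>1 \<phi>2 t. \<phi>1 \<in> \<Phi> \<Longrightarrow> \<phi>2 \<in> \<Phi> \<Longrightarrow> t \<in> {0..1} \<Longrightarrow>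
        \<exists>\<phi>\<in>\<Phi>. \<forall>x\<in>X. \<phi> x \<le> t * \<phi>1 x + (1 - t) * \<phi>2 x"
    and level: "\<And>\<phi>. \<phi> \<in> \<Phi> \<Longrightarrow> \<exists>x\<in>X. c \<le> \<phi> x"
  shows "\<exists>x\<in>X. \<forall>\<phi>\<in>\<Phi>. c \<le> \<phi> x"
proof -
  have "X \<inter> (\<Inter>\<phi>\<in>\<Phi>. {x\<in>X. c \<le> \<phi> x}) \<noteq> {}"
  proof (rule compact_imp_fip_image[OF \<open>compact X\<close>])
    show "closed {x\<in>X. c \<le> \<phi> x}" if "\<phi> \<in> \<Phi>" for \<phi>
      using cont_aff[OF that] compact_imp_closed[OF \<open>compact X\<close>] by (intro continuous_on_closed_Collect_le) auto
  next
    fix \<Psi> assume "finite \<Psi>" and "\<Psi> \<subseteq> \<Phi>"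
    have "\<exists>x\<in>X. \<forall>\<phi>\<in>\<Psi>. c \<le> \<phi> x"
    proof (rule mix_affine_finite_common_level[OF \<open>finite \<Psi>\<close> assms(1-3)])
      show "continuous_on X \<phi> \<and> mix_affine mix X \<phi>" if "\<phi> \<in> \<Psi>" for \<phi>
        using cont_aff that \<open>\<Psi> \<subseteq> \<Phi>\<close> by blast
      fix w :: "('a \<Rightarrow> real) \<Rightarrow> real" assume "\<forall>\<phi>\<in>\<Psi>. 0 \<le> w \<phi>" and "sum w \<Psi> = 1"
      then obtain \<phi>0 where "\<phi>0 \<in> \<Phi>" "\<forall>x\<in>X. \<phi>0 x \<le> (\<Sum>\<psi>\<in>\<Psi>. w \<psi> * \<psi> x)"
        using convex_like_below_combination[OF \<open>finite \<Psi>\<close> \<open>\<Psi> \<subseteq> \<Phi>\<close> convex_like] by blast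
      then show "\<exists>x\<in>X. c \<le> (\<Sum>\<phi>\<in>\<Psi>. w \<phi> * \<phi> x)" using level by force
    qed
    then show "X \<inter> (\<Inter>\<phi>\<in>\<Psi>. {x\<in>X. c \<le> \<phi> x}) \<noteq> {}" by auto
  qed
  then show ?thesis by auto
qed

section \<open>Probability measures on \<open>[0, 1]\<close> and their moments\<close>

definition clamp01 :: "real \<Rightarrow> real" where
  "clamp01 x = max 0 (min 1 x)"

text \<open>Integrals against measures in \<^const>\<open>M1Set\<close> of functions that are only meaningful on \<open>[0, 1]\<close>;
  composing with \<^const>\<open>clamp01\<close> does not change the integral but makes the integrand bounded
  and continuous on all of \<open>\<real>\<close>.\<close>
definition unit_integral :: "(real \<Rightarrow> real) \<Rightarrow> real measure \<Rightarrow> real" where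
  "unit_integral g m = (\<integral>x. g (clamp01 x) \<partial>m)"

definition moments :: "real measure \<Rightarrow> nat \<Rightarrow> real" where
  "moments m k = unit_integral (\<lambda>x. x ^ k) m"

lemma clamp01_in: "clamp01 x \<in> {0..1}"
  unfolding clamp01_def by auto

lemma clamp01_id: "x \<in> {0..1} \<Longrightarrow> clamp01 x = x"
  unfolding clamp01_def by auto

lemma M1Set_D:
  assumes "m \<in> M1Set"
  shows "prob_space m" and "sets m = sets borel" and "space m = UNIV" and "real_distribution m"
    and "AE x in m. x \<in> {0..1}"
proof -
  show "prob_space m" and sets: "sets m = sets borel" using assms unfolding M1Set_def by auto
  then show "real_distribution m" by (simp add: real_distribution_def real_distribution_axioms_def)
  show "space m = UNIV" using sets_eq_imp_space_eq[OF sets] by simp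
  interpret prob_space m by fact
  have "emeasure m {0..1} = 1" using assms unfolding M1Set_def by auto
  moreover have "{x\<in>space m. x \<in> {0..1}} = {0..1}" using \<open>space m = UNIV\<close> by auto
  ultimately show "AE x in m. x \<in> {0..1}"
    using prob_Collect_eq_1[of "\<lambda>x. x \<in> {0..1}"] sets by (simp add: emeasure_eq_measure)
qed

lemma M1Set_return_0: "return borel (0::real) \<in> M1Set"
  unfolding M1Set_def by (auto simp: prob_space_return emeasure_return)

lemma isCont_clamp01_comp:
  assumes "continuous_on {0..1} g"
  shows "isCont (\<lambda>x. g (clamp01 x)) x"
proof -
  have "continuous_on UNIV clamp01" unfolding clamp01_def by (intro continuous_intros)
  then have "continuous_on UNIV (\<lambda>x. g (clamp01 x))"
    by (rule continuous_on_compose2[OF assms]) (use clamp01_in in auto)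
  then show ?thesis by (simp add: continuous_on_eq_continuous_at)
qed

lemma borel_measurable_clamp01_comp:
  "continuous_on {0..1} g \<Longrightarrow> (\<lambda>x. g (clamp01 x)) \<in> borel_measurable borel"
  by (rule borel_measurable_continuous_onI, rule continuous_at_imp_continuous_on) (blast intro: isCont_clamp01_comp)

lemma bounded_clamp01_comp:
  fixes g :: "real \<Rightarrow> real"
  assumes "continuous_on {0..1} g"
  obtains B where "\<And>x. \<bar>g (clamp01 x)\<bar> \<le> B"
proof -
  have "bounded (g ` {0..1})" by (intro compact_imp_bounded compact_continuous_image assms) auto
  then obtain B where "\<forall>y\<in>g ` {0..1}. norm y \<le> B" using bounded_iff by blast
  then have "\<bar>g (clamp01 x)\<bar> \<le> B" for x using clamp01_in by auto
  then show ?thesis by (rule that)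
qed

lemma integrable_clamp01_comp:
  fixes g :: "real \<Rightarrow> real"
  assumes "continuous_on {0..1} g" and "m \<in> M1Set"
  shows "integrable m (\<lambda>x. g (clamp01 x))"
proof -
  interpret prob_space m using M1Set_D(1)[OF assms(2)] .
  obtain B where "\<And>x. \<bar>g (clamp01 x)\<bar> \<le> B" using bounded_clamp01_comp[OF assms(1)] by blast
  then show ?thesis
    using borel_measurable_clamp01_comp[OF assms(1)] M1Set_D(2)[OF assms(2)]
    by (intro integrable_const_bound[of _ B]) auto
qed

lemma integrable_clamp01_power: "m \<in> M1Set \<Longrightarrow> integrable m (\<lambda>x. clamp01 x ^ k)"
  using integrable_clamp01_comp[of "\<lambda>x. x ^ k" m] by (simp add: continuous_on_power continuous_on_id)

lemma moments_nonneg: "m \<in> M1Set \<Longrightarrow> 0 \<le> moments m k"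
  unfolding moments_def unit_integral_def by (rule Bochner_Integration.integral_nonneg) (use clamp01_in in auto)

lemma unit_integral_moment_approx:
  fixes g :: "real \<Rightarrow> real"
  assumes g: "continuous_on {0..1} g" and e: "e > 0"
  obtains a n where "\<And>m. m \<in> M1Set \<Longrightarrow> \<bar>unit_integral g m - (\<Sum>i\<le>n. a i * moments m i)\<bar> \<le> e"
proof -
  obtain p where p: "real_polynomial_function p" "\<And>x. x \<in> {0..1} \<Longrightarrow> \<bar>g x - p x\<bar> < e"
    using Stone_Weierstrass_real_polynomial_function[OF compact_Icc g e] by blast
  obtain a n where p_eq: "p = (\<lambda>x. \<Sum>i\<le>n. a i * x ^ i)" using p(1) real_polynomial_function_iff_sum by blast
  have "\<bar>unit_integral g m - (\<Sum>i\<le>n. a i * moments m i)\<bar> \<le> e" if m: "m \<in> M1Set" for m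
  proof -
    interpret prob_space m using M1Set_D(1)[OF m] .
    have ipow: "integrable m (\<lambda>x. clamp01 x ^ i)" for i
      using integrable_clamp01_power[OF m] .
    have ig: "integrable m (\<lambda>x. g (clamp01 x))" using integrable_clamp01_comp[OF g m] .
    have "(\<Sum>i\<le>n. a i * moments m i) = (\<integral>x. p (clamp01 x) \<partial>m)"
      unfolding moments_def unit_integral_def p_eq using ipow by (simp add: integral_sum)
    then have "\<bar>unit_integral g m - (\<Sum>i\<le>n. a i * moments m i)\<bar> = \<bar>\<integral>x. g (clamp01 x) - p (clamp01 x) \<partial>m\<bar>"
      unfolding unit_integral_def using ig ipow by (simp add: p_eq)
    also have "\<dots> \<le> (\<integral>x. \<bar>g (clamp01 x) - p (clamp01 x)\<bar> \<partial>m)" by (rule integral_abs_bound)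
    also have "\<dots> \<le> e"
      using ig ipow p(2) clamp01_in by (intro integral_le_const) (auto simp: p_eq intro!: less_imp_le)
    finally show ?thesis .
  qed
  then show ?thesis using that by blast
qed

lemma unit_integral_moments_tendsto:
  fixes g :: "real \<Rightarrow> real"
  assumes g: "continuous_on {0..1} g" and ms: "\<And>n. ms n \<in> M1Set" and m: "m \<in> M1Set"
    and conv: "\<And>k. (\<lambda>n. moments (ms n) k) \<longlonglongrightarrow> moments m k"
  shows "(\<lambda>n. unit_integral g (ms n)) \<longlonglongrightarrow> unit_integral g m"
proof (rule LIMSEQ_I)
  fix r :: real assume "r > 0"
  then obtain a n where approx: "\<And>m. m \<in> M1Set \<Longrightarrow> \<bar>unit_integral g m - (\<Sum>i\<le>n. a i * moments m i)\<bar> \<le> r / 3"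
    using unit_integral_moment_approx[OF g, of "r / 3"] by auto
  have "(\<lambda>j. \<Sum>i\<le>n. a i * moments (ms j) i) \<longlonglongrightarrow> (\<Sum>i\<le>n. a i * moments m i)"
    by (intro tendsto_intros conv)
  then obtain N where N: "\<And>j. j \<ge> N \<Longrightarrow> \<bar>(\<Sum>i\<le>n. a i * moments (ms j) i) - (\<Sum>i\<le>n. a i * moments m i)\<bar> < r / 3"
    using LIMSEQ_D[of _ _ "r / 3"] \<open>r > 0\<close> by force
  have "\<bar>unit_integral g (ms j) - unit_integral g m\<bar> < r" if "j \<ge> N" for j
    using N[OF that] approx[OF ms, of j] approx[OF m] by linarith
  then show "\<exists>N. \<forall>j\<ge>N. norm (unit_integral g (ms j) - unit_integral g m) < r" by auto
qed

lemma unit_integral_moments_affine: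
  fixes g :: "real \<Rightarrow> real"
  assumes g: "continuous_on {0..1} g" and m: "m \<in> M1Set" and m1: "m1 \<in> M1Set" and m2: "m2 \<in> M1Set"
    and eq: "\<And>k. moments m k = t * moments m1 k + (1 - t) * moments m2 k"
  shows "unit_integral g m = t * unit_integral g m1 + (1 - t) * unit_integral g m2"
proof (rule ccontr)
  define D where "D = unit_integral g m - (t * unit_integral g m1 + (1 - t) * unit_integral g m2)"
  define C where "C = 1 + \<bar>t\<bar> + \<bar>1 - t\<bar>"
  assume "\<not> ?thesis"
  then have "D \<noteq> 0" by (simp add: D_def)
  have "C > 0" by (simp add: C_def add_pos_nonneg)
  define e where "e = \<bar>D\<bar> / (2 * C)"
  have "0 < e" unfolding e_def using \<open>D \<noteq> 0\<close> \<open>C > 0\<close> by simp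
  then obtain a n where approx: "\<And>m. m \<in> M1Set \<Longrightarrow> \<bar>unit_integral g m - (\<Sum>i\<le>n. a i * moments m i)\<bar> \<le> e"
    using unit_integral_moment_approx[OF g] by metis
  define p where "p = (\<lambda>m. \<Sum>i\<le>n. a i * moments m i)"
  have "p m = (\<Sum>i\<le>n. t * (a i * moments m1 i) + (1 - t) * (a i * moments m2 i))"
    unfolding p_def eq by (intro sum.cong) (auto simp: algebra_simps)
  also have "\<dots> = t * p m1 + (1 - t) * p m2" unfolding p_def by (simp add: sum.distrib sum_distrib_left)
  finally have "p m = t * p m1 + (1 - t) * p m2" .
  then have "\<bar>D\<bar> = \<bar>(unit_integral g m - p m) - t * (unit_integral g m1 - p m1) - (1 - t) * (unit_integral g m2 - p m2)\<bar>"
    unfolding D_def by (simp add: algebra_simps)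
  also have "\<dots> \<le> \<bar>unit_integral g m - p m\<bar> + \<bar>t\<bar> * \<bar>unit_integral g m1 - p m1\<bar> + \<bar>1 - t\<bar> * \<bar>unit_integral g m2 - p m2\<bar>"
    by (simp add: abs_mult[symmetric])
  also have "\<dots> \<le> e + \<bar>t\<bar> * e + \<bar>1 - t\<bar> * e"
    unfolding p_def using approx[OF m] approx[OF m1] approx[OF m2] by (intro add_mono mult_left_mono) auto
  also have "\<dots> = C * e" by (simp add: C_def algebra_simps)
  also have "\<dots> = \<bar>D\<bar> / 2" using \<open>C > 0\<close> by (simp add: e_def)
  finally show False using \<open>D \<noteq> 0\<close> by simp
qed

definition moment_space :: "(nat \<Rightarrow> real) set" where
  "moment_space = moments ` M1Set"

definition moment_rep :: "(nat \<Rightarrow> real) \<Rightarrow> real measure" where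
  "moment_rep y = (SOME m. m \<in> M1Set \<and> moments m = y)"

definition mix_seq :: "real \<Rightarrow> (nat \<Rightarrow> real) \<Rightarrow> (nat \<Rightarrow> real) \<Rightarrow> nat \<Rightarrow> real" where
  "mix_seq t y1 y2 = (\<lambda>k. t * y1 k + (1 - t) * y2 k)"

definition mixture :: "real \<Rightarrow> real measure \<Rightarrow> real measure \<Rightarrow> real measure" where
  "mixture t m1 m2 = measure_pmf (bernoulli_pmf t) \<bind> (\<lambda>b. if b then m1 else m2)"

lemma moment_rep: "y \<in> moment_space \<Longrightarrow> moment_rep y \<in> M1Set \<and> moments (moment_rep y) = y"
  unfolding moment_space_def moment_rep_def by (rule someI_ex) auto

lemma moment_space_nonempty: "moment_space \<noteq> {}"
  unfolding moment_space_def using M1Set_return_0 by auto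

lemma
  assumes m1: "m1 \<in> M1Set" and m2: "m2 \<in> M1Set" and t: "t \<in> {0..1}"
  shows sets_mixture: "sets (mixture t m1 m2) = sets borel"
    and emeasure_mixture: "A \<in> sets borel \<Longrightarrow>
      emeasure (mixture t m1 m2) A = emeasure m1 A * ennreal t + emeasure m2 A * ennreal (1 - t)"
    and nn_integral_mixture: "f \<in> borel_measurable borel \<Longrightarrow>
      (\<integral>\<^sup>+x. f x \<partial>mixture t m1 m2) = (\<integral>\<^sup>+x. f x \<partial>m1) * ennreal t + (\<integral>\<^sup>+x. f x \<partial>m2) * ennreal (1 - t)"
proof -
  define K where "K = (\<lambda>b. if b then m1 else m2)"
  have "K b \<in> space (subprob_algebra borel)" for b
    using M1Set_D(1,2)[OF m1] M1Set_D(1,2)[OF m2]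
    by (auto simp: K_def space_subprob_algebra intro: prob_space_imp_subprob_space)
  then have K: "K \<in> measure_pmf (bernoulli_pmf t) \<rightarrow>\<^sub>M subprob_algebra borel" by simp
  show "sets (mixture t m1 m2) = sets borel" unfolding mixture_def K_def[symmetric]
    using M1Set_D(2)[OF m1] M1Set_D(2)[OF m2] by (intro sets_bind[of _ _ borel]) (auto simp: K_def)
  show "emeasure (mixture t m1 m2) A = emeasure m1 A * ennreal t + emeasure m2 A * ennreal (1 - t)"
    if "A \<in> sets borel"
    unfolding mixture_def K_def[symmetric] emeasure_bind[OF _ K that, simplified]
    using t by (simp add: K_def)
  show "(\<integral>\<^sup>+x. f x \<partial>mixture t m1 m2) = (\<integral>\<^sup>+x. f x \<partial>m1) * ennreal t + (\<integral>\<^sup>+x. f x \<partial>m2) * ennreal (1 - t)"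
    if "f \<in> borel_measurable borel"
    unfolding mixture_def K_def[symmetric] nn_integral_bind[OF that K]
    using t by (simp add: K_def)
qed

lemma mixture_M1Set:
  assumes m1: "m1 \<in> M1Set" and m2: "m2 \<in> M1Set" and t: "t \<in> {0..1}"
  shows "mixture t m1 m2 \<in> M1Set"
proof -
  have sets: "sets (mixture t m1 m2) = sets borel" by (rule sets_mixture[OF assms])
  have weights: "ennreal t + ennreal (1 - t) = 1" using t by (simp add: ennreal_plus[symmetric])
  have "emeasure m UNIV = 1" if "m \<in> M1Set" for m
    using prob_space.emeasure_space_1[OF M1Set_D(1)[OF that]] M1Set_D(3)[OF that] by simp
  then have "emeasure (mixture t m1 m2) UNIV = 1"
    using emeasure_mixture[OF assms, of UNIV] weights m1 m2 by simp
  moreover have "emeasure (mixture t m1 m2) {0..1} = 1"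
    using emeasure_mixture[OF assms, of "{0..1}"] weights m1 m2 unfolding M1Set_def by simp
  moreover have "space (mixture t m1 m2) = UNIV" using sets_eq_imp_space_eq[OF sets] by simp
  ultimately show ?thesis unfolding M1Set_def using sets by (simp add: prob_spaceI)
qed

lemma moments_mixture:
  assumes m1: "m1 \<in> M1Set" and m2: "m2 \<in> M1Set" and t: "t \<in> {0..1}"
  shows "moments (mixture t m1 m2) = mix_seq t (moments m1) (moments m2)"
proof
  fix k
  have nn: "(\<integral>\<^sup>+x. ennreal (clamp01 x ^ k) \<partial>m) = ennreal (moments m k)" if "m \<in> M1Set" for m
    unfolding moments_def unit_integral_def
    using integrable_clamp01_power[OF that] clamp01_in by (subst nn_integral_eq_integral) auto
  have "(\<lambda>x. ennreal (clamp01 x ^ k)) \<in> borel_measurable borel"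
    using borel_measurable_clamp01_comp[of "\<lambda>x. x ^ k"] by (simp add: continuous_on_power continuous_on_id)
  then have "ennreal (moments (mixture t m1 m2) k) = ennreal (moments m1 k) * ennreal t + ennreal (moments m2 k) * ennreal (1 - t)"
    using nn_integral_mixture[OF assms] nn[OF mixture_M1Set[OF assms]] nn[OF m1] nn[OF m2] by simp
  also have "\<dots> = ennreal (t * moments m1 k) + ennreal ((1 - t) * moments m2 k)"
    using t moments_nonneg[OF m1, of k] moments_nonneg[OF m2, of k]
    by (subst (1 2) ennreal_mult[symmetric]) (auto simp: mult.commute)
  also have "\<dots> = ennreal (t * moments m1 k + (1 - t) * moments m2 k)"
    using t moments_nonneg[OF m1] moments_nonneg[OF m2] by (intro ennreal_plus[symmetric]) auto
  finally have eq: "ennreal (moments (mixture t m1 m2) k) = ennreal (t * moments m1 k + (1 - t) * moments m2 k)" .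
  show "moments (mixture t m1 m2) k = mix_seq t (moments m1) (moments m2) k"
    unfolding mix_seq_def using t moments_nonneg[OF m1, of k] moments_nonneg[OF m2, of k]
    by (intro ennreal_inj[THEN iffD1, OF _ _ eq] moments_nonneg[OF mixture_M1Set[OF assms]]) auto
qed

lemma moment_space_mix_closed: "mix_closed mix_seq moment_space"
  unfolding mix_closed_def
proof (intro ballI)
  fix y1 y2 t assume y: "y1 \<in> moment_space" "y2 \<in> moment_space" and t: "t \<in> {0..1::real}"
  have "moments (mixture t (moment_rep y1) (moment_rep y2)) = mix_seq t y1 y2"
    using moments_mixture[OF _ _ t] moment_rep[OF y(1)] moment_rep[OF y(2)] by simp
  moreover have "mixture t (moment_rep y1) (moment_rep y2) \<in> M1Set"
    using mixture_M1Set[OF _ _ t] moment_rep[OF y(1)] moment_rep[OF y(2)] by simp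
  ultimately show "mix_seq t y1 y2 \<in> moment_space" unfolding moment_space_def by force
qed

lemma tendsto_componentwise:
  fixes F :: "'b \<Rightarrow> 'i \<Rightarrow> 'c::topological_space"
  shows "(F \<longlongrightarrow> l) G \<longleftrightarrow> (\<forall>k. ((\<lambda>n. F n k) \<longlongrightarrow> l k) G)"
  using limitin_componentwise[of "\<lambda>_. euclidean" UNIV F l G] by (simp add: euclidean_product_topology)

lemma M1Set_tight:
  assumes ms: "\<And>n. ms n \<in> M1Set"
  shows "tight ms"
  unfolding tight_def
proof (intro conjI allI impI)
  show "real_distribution (ms n)" for n using M1Set_D(4)[OF ms] .
  fix e :: real assume "e > 0"
  have "1 - e < measure (ms n) {-1<..1}" for n
  proof -
    interpret prob_space "ms n" using M1Set_D(1)[OF ms] .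
    have "measure (ms n) {0..1} = 1" using ms[of n] unfolding M1Set_def by (simp add: measure_def)
    moreover have "measure (ms n) {0..1} \<le> measure (ms n) {-1<..1}"
      using M1Set_D(2)[OF ms] by (intro finite_measure_mono) auto
    ultimately show ?thesis using \<open>e > 0\<close> by simp
  qed
  then show "\<exists>a b::real. a < b \<and> (\<forall>n. 1 - e < measure (ms n) {a<..b})" by (intro exI[of _ "-1"] exI[of _ 1]) auto
qed

lemma weak_conv_unit_integral:
  fixes g :: "real \<Rightarrow> real"
  assumes "\<And>n. real_distribution (ms n)" and "real_distribution M" and "weak_conv_m ms M"
    and "continuous_on {0..1} g"
  shows "(\<lambda>n. unit_integral g (ms n)) \<longlonglongrightarrow> unit_integral g M"
proof -
  obtain B where "\<And>x. \<bar>g (clamp01 x)\<bar> \<le> B" using bounded_clamp01_comp[OF assms(4)] by blast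
  then show ?thesis unfolding unit_integral_def
    using isCont_clamp01_comp[OF assms(4)] by (intro weak_conv_imp_integral_bdd_continuous_conv[OF assms(1-3)]) auto
qed

text \<open>A weak limit of measures concentrated on \<open>[0, 1]\<close> is concentrated on \<open>[0, 1]\<close>: integrate the
  bounded continuous distance to \<open>[0, 1]\<close>.\<close>
lemma weak_limit_M1Set:
  assumes ms: "\<And>n. ms n \<in> M1Set" and M: "real_distribution M" and conv: "weak_conv_m ms M"
  shows "M \<in> M1Set"
proof -
  interpret M: real_distribution M by fact
  define h where "h x = min 1 \<bar>x - clamp01 x\<bar>" for x
  have h_bounded: "norm (h x) \<le> 1" for x by (simp add: h_def)
  have "isCont h x" for x unfolding h_def clamp01_def by (intro continuous_intros)
  then have h_meas: "h \<in> borel_measurable borel" by (intro borel_measurable_continuous_onI continuous_at_imp_continuous_on) auto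
  have "(\<integral>x. h x \<partial>ms n) = 0" for n
  proof -
    have "AE x in ms n. h x = 0" using M1Set_D(5)[OF ms] by eventually_elim (auto simp: h_def clamp01_id)
    then show ?thesis by (simp add: integral_eq_zero_AE)
  qed
  moreover have "(\<lambda>n. \<integral>x. h x \<partial>ms n) \<longlonglongrightarrow> (\<integral>x. h x \<partial>M)"
    using M1Set_D(4)[OF ms] \<open>\<And>x. isCont h x\<close> h_bounded
    by (rule weak_conv_imp_integral_bdd_continuous_conv[OF _ M conv])
  ultimately have "(\<integral>x. h x \<partial>M) = 0" by (simp add: LIMSEQ_const_iff)
  moreover have "integrable M h" using h_meas by (intro M.integrable_const_bound[of _ 1]) (auto simp: h_def)
  ultimately have "AE x in M. h x = 0" by (subst (asm) integral_nonneg_eq_0_iff_AE) (auto simp: h_def)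
  then have "AE x in M. x \<in> {0..1}" by eventually_elim (auto simp: h_def clamp01_def split: if_splits)
  moreover have "{x\<in>space M. x \<in> {0..1}} = {0..1}"
    using sets_eq_imp_space_eq[OF M.events_eq_borel] by auto
  ultimately have "emeasure M {0..1} = 1"
    using M.prob_Collect_eq_1[of "\<lambda>x. x \<in> {0..1}"] by (simp add: M.emeasure_eq_measure)
  then show ?thesis unfolding M1Set_def using M.prob_space_axioms by simp
qed

text \<open>Compactness of \<^const>\<open>moment_space\<close> in the product topology is Helly's selection theorem.\<close>
lemma compact_moment_space: "compact moment_space"
proof -
  have "seq_compact moment_space"
  proof (rule seq_compactI)
    fix f :: "nat \<Rightarrow> nat \<Rightarrow> real" assume "\<forall>n. f n \<in> moment_space"
    then have "\<forall>n. \<exists>m. m \<in> M1Set \<and> f n = moments m" unfolding moment_space_def by blast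
    then obtain ms where ms: "\<And>n. ms n \<in> M1Set" and f: "\<And>n. f n = moments (ms n)" by metis
    have "tight ms" using ms by (rule M1Set_tight)
    then obtain r M where r: "strict_mono r" and M: "real_distribution M" and conv: "weak_conv_m (ms \<circ> id \<circ> r) M"
      using tight_imp_convergent_subsubsequence[OF _ strict_mono_id] by blast
    have "M \<in> M1Set" using ms conv by (intro weak_limit_M1Set[OF _ M]) auto
    moreover have "(\<lambda>n. moments (ms (r n)) k) \<longlonglongrightarrow> moments M k" for k
      using weak_conv_unit_integral[OF _ M conv, of "\<lambda>x. x ^ k"] M1Set_D(4)[OF ms]
      by (simp add: moments_def continuous_on_power continuous_on_id)
    then have "(f \<circ> r) \<longlonglongrightarrow> moments M" by (simp add: tendsto_componentwise f)
    ultimately show "\<exists>l\<in>moment_space. \<exists>r. strict_mono r \<and> (f \<circ> r) \<longlonglongrightarrow> l"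
      using r unfolding moment_space_def by blast
  qed
  then show ?thesis using seq_compact_eq_compact by blast
qed

lemma continuous_on_unit_integral_moment_rep:
  assumes "continuous_on {0..1} g"
  shows "continuous_on moment_space (\<lambda>y. unit_integral g (moment_rep y))"
  unfolding continuous_on_sequentially
proof (intro allI ballI impI, elim conjE)
  fix x :: "nat \<Rightarrow> nat \<Rightarrow> real" and a
  assume "a \<in> moment_space" "\<forall>n. x n \<in> moment_space" "x \<longlonglongrightarrow> a"
  then show "((\<lambda>y. unit_integral g (moment_rep y)) \<circ> x) \<longlonglongrightarrow> unit_integral g (moment_rep a)"
    using moment_rep unfolding o_def
    by (intro unit_integral_moments_tendsto[OF assms]) (auto simp: tendsto_componentwise)
qed

lemma mix_affine_unit_integral_moment_rep:
  assumes "continuous_on {0..1} g"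
  shows "mix_affine mix_seq moment_space (\<lambda>y. unit_integral g (moment_rep y))"
  unfolding mix_affine_def
proof (intro ballI)
  fix y1 y2 t assume y: "y1 \<in> moment_space" "y2 \<in> moment_space" and "t \<in> {0..1::real}"
  then have "mix_seq t y1 y2 \<in> moment_space" using moment_space_mix_closed unfolding mix_closed_def by blast
  then show "unit_integral g (moment_rep (mix_seq t y1 y2))
      = t * unit_integral g (moment_rep y1) + (1 - t) * unit_integral g (moment_rep y2)"
    using moment_rep y by (intro unit_integral_moments_affine[OF assms]) (auto simp: mix_seq_def)
qed

lemma unit_integral_moment_rep:
  assumes "continuous_on {0..1} g" and "m \<in> M1Set"
  shows "unit_integral g (moment_rep (moments m)) = unit_integral g m"
proof -
  have "moments m \<in> moment_space" using assms(2) unfolding moment_space_def by simp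
  then show ?thesis
    using unit_integral_moments_affine[OF assms(1) _ assms(2) assms(2), of "moment_rep (moments m)" 1]
      moment_rep by simp
qed

section \<open>Square integrable functions on \<open>(0, 1)\<close>\<close>

abbreviation ind01 :: "real \<Rightarrow> real" where
  "ind01 \<equiv> indicator {0<..<1}"

definition L2_01 :: "(real \<Rightarrow> real) \<Rightarrow> bool" where
  "L2_01 f \<longleftrightarrow> (\<lambda>s. ind01 s * f s) \<in> borel_measurable borel \<and> integrable lborel (\<lambda>s. ind01 s * (f s)\<^sup>2)"

lemma LBINT_01: "(LBINT s=0..1. f s) = (\<integral>s. ind01 s * f s \<partial>lborel)"
proof -
  have "(LBINT s=0..1. f s) = (LINT s:einterval 0 1|lborel. f s)"
    by (rule interval_lebesgue_integral_le_eq) simp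
  also have "einterval 0 1 = {0<..<1::real}" by (auto simp: einterval_def)
  finally show ?thesis unfolding set_lebesgue_integral_def by simp
qed

lemma ind01_mult_distrib: "ind01 s * (f s * g s) = (ind01 s * f s) * (ind01 s * g s)"
  by (simp add: indicator_def)

lemma ind01_sq_measurable:
  assumes "(\<lambda>s. ind01 s * f s) \<in> borel_measurable borel"
  shows "(\<lambda>s. ind01 s * (f s)\<^sup>2) \<in> borel_measurable borel"
proof -
  have "(\<lambda>s. ind01 s * (f s)\<^sup>2) = (\<lambda>s. (ind01 s * f s)\<^sup>2)" by (auto simp: fun_eq_iff indicator_def)
  then show ?thesis using assms by simp
qed

lemma L2_01_measurable: "L2_01 f \<Longrightarrow> (\<lambda>s. ind01 s * f s) \<in> borel_measurable borel"
  unfolding L2_01_def by simp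

lemma L2_01_integrable_prod:
  assumes f: "L2_01 f" and g: "L2_01 g"
  shows "integrable lborel (\<lambda>s. ind01 s * (f s * g s))"
proof (rule Bochner_Integration.integrable_bound)
  show "integrable lborel (\<lambda>s. ind01 s * (f s)\<^sup>2 + ind01 s * (g s)\<^sup>2)" using f g unfolding L2_01_def by auto
  show "(\<lambda>s. ind01 s * (f s * g s)) \<in> borel_measurable lborel"
    unfolding ind01_mult_distrib
    using borel_measurable_times[OF L2_01_measurable[OF f] L2_01_measurable[OF g]] by simp
  have "\<bar>f x * g x\<bar> \<le> (f x)\<^sup>2 + (g x)\<^sup>2" for x
  proof -
    have "2 * \<bar>f x * g x\<bar> \<le> (f x)\<^sup>2 + (g x)\<^sup>2"
      using sum_squares_bound[of "\<bar>f x\<bar>" "\<bar>g x\<bar>"] by (simp add: abs_mult power2_abs mult.assoc)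
    then show ?thesis using abs_ge_zero[of "f x * g x"] by linarith
  qed
  then show "AE x in lborel. norm (ind01 x * (f x * g x)) \<le> norm (ind01 x * (f x)\<^sup>2 + ind01 x * (g x)\<^sup>2)"
    by (auto simp: indicator_def)
qed

lemma L2_01_const: "L2_01 (\<lambda>_. c)"
proof -
  have "integrable lborel (\<lambda>s. ind01 s * d)" for d :: real
    by (intro integrable_mult_left integrable_real_indicator) (auto simp: emeasure_lborel_Ioo)
  then show ?thesis unfolding L2_01_def by (auto intro!: borel_measurable_times)
qed

lemma L2_01_integrable: "L2_01 f \<Longrightarrow> integrable lborel (\<lambda>s. ind01 s * f s)"
  using L2_01_integrable_prod[of f "\<lambda>_. 1"] L2_01_const by simp

lemma L2_01_lin:
  assumes f: "L2_01 f" and g: "L2_01 g"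
  shows "L2_01 (\<lambda>s. a * f s + b * g s)"
proof -
  have "(\<lambda>s. ind01 s * (a * f s + b * g s)) = (\<lambda>s. a * (ind01 s * f s) + b * (ind01 s * g s))"
    by (auto simp: fun_eq_iff algebra_simps)
  moreover have "(\<lambda>s. ind01 s * (a * f s + b * g s)\<^sup>2)
      = (\<lambda>s. a\<^sup>2 * (ind01 s * (f s)\<^sup>2) + 2 * a * b * (ind01 s * (f s * g s)) + b\<^sup>2 * (ind01 s * (g s)\<^sup>2))"
    by (auto simp: fun_eq_iff algebra_simps power2_eq_square)
  ultimately show ?thesis using f g L2_01_integrable_prod[OF f g] unfolding L2_01_def by auto
qed

lemma L2_01_integrable_sq_dist: "L2_01 f \<Longrightarrow> integrable lborel (\<lambda>s. ind01 s * (f s - c)\<^sup>2)"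
  using L2_01_lin[of f "\<lambda>_. 1" 1 "- c"] L2_01_const unfolding L2_01_def by simp

lemma L2_01_min:
  assumes f: "L2_01 f"
  shows "L2_01 (\<lambda>s. min (f s) c)"
proof -
  have "(\<lambda>s. ind01 s * min (f s) c) = (\<lambda>s. min (ind01 s * f s) (ind01 s * c))"
    by (auto simp: fun_eq_iff indicator_def)
  moreover have "(\<lambda>s. min (ind01 s * f s) (ind01 s * c)) \<in> borel_measurable borel"
    using L2_01_measurable[OF f] by (intro borel_measurable_min) simp_all
  ultimately have meas: "(\<lambda>s. ind01 s * min (f s) c) \<in> borel_measurable borel" by simp
  have "integrable lborel (\<lambda>s. ind01 s * (min (f s) c)\<^sup>2)"
  proof (rule Bochner_Integration.integrable_bound)
    show "integrable lborel (\<lambda>s. ind01 s * (f s)\<^sup>2 + ind01 s * c\<^sup>2)"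
      using f L2_01_const[of c] unfolding L2_01_def by auto
    show "(\<lambda>s. ind01 s * (min (f s) c)\<^sup>2) \<in> borel_measurable lborel"
      using ind01_sq_measurable[OF meas] by simp
    show "AE x in lborel. norm (ind01 x * (min (f x) c)\<^sup>2) \<le> norm (ind01 x * (f x)\<^sup>2 + ind01 x * c\<^sup>2)"
      by (auto simp: indicator_def min_def)
  qed
  then show ?thesis using meas unfolding L2_01_def by simp
qed

lemma L2_01_reflect:
  assumes "L2_01 f"
  shows "L2_01 (\<lambda>s. f (1 - s))"
proof -
  have reflect: "(\<lambda>s. ind01 s * g (1 - s)) = (\<lambda>s. (\<lambda>t. ind01 t * g t) (1 + (- 1) * s))" for g :: "real \<Rightarrow> real"
    by (auto simp: fun_eq_iff indicator_def)
  have "(\<lambda>s. ind01 s * f (1 - s)) \<in> borel_measurable borel"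
    unfolding reflect using L2_01_measurable[OF assms] by measurable
  moreover have "integrable lborel (\<lambda>s. ind01 s * (f (1 - s))\<^sup>2)"
    unfolding reflect[of "\<lambda>t. (f t)\<^sup>2"] using assms unfolding L2_01_def
    by (intro lborel_integrable_real_affine) auto
  ultimately show ?thesis unfolding L2_01_def by simp
qed

lemma QSet_L2_01:
  assumes "Q \<in> QSet"
  shows "L2_01 Q"
proof -
  have meas: "(\<lambda>x. indicator {0..<1} x * Q x) \<in> borel_measurable borel"
    and int: "integrable lborel (\<lambda>x. indicator {0..<1} x * (Q x)\<^sup>2)"
    using assms unfolding QSet_def set_borel_measurable_def set_integrable_def by auto
  have "(\<lambda>s. ind01 s * Q s) = (\<lambda>s. ind01 s * (indicator {0..<1} s * Q s))"
    by (auto simp: fun_eq_iff indicator_def)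
  then have "(\<lambda>s. ind01 s * Q s) \<in> borel_measurable borel" using meas by simp
  moreover have "integrable lborel (\<lambda>s. ind01 s * (Q s)\<^sup>2)"
  proof (rule Bochner_Integration.integrable_bound[OF int])
    show "(\<lambda>s. ind01 s * (Q s)\<^sup>2) \<in> borel_measurable lborel"
      using ind01_sq_measurable[OF \<open>(\<lambda>s. ind01 s * Q s) \<in> borel_measurable borel\<close>] by simp
    show "AE x in lborel. norm (ind01 x * (Q x)\<^sup>2) \<le> norm (indicator {0..<1} x * (Q x)\<^sup>2)"
      by (auto simp: indicator_def)
  qed
  ultimately show ?thesis unfolding L2_01_def by simp
qed

text \<open>The part of \<^const>\<open>Kfun\<close> not involving \<open>m\<close>, with \<open>q s = Q\<^sub>\<rho>(1 - s)\<close>.\<close>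
definition Jfun :: "real \<Rightarrow> real \<Rightarrow> (real \<Rightarrow> real) \<Rightarrow> (real \<Rightarrow> real) \<Rightarrow> real" where
  "Jfun \<beta> lam q Q = (LBINT s=0..1. (Q s - \<beta>)\<^sup>2) + lam * (LBINT s=0..1. Q s * q s)"

lemma Jfun_eq: "Jfun \<beta> lam q Q = (\<integral>s. ind01 s * (Q s - \<beta>)\<^sup>2 \<partial>lborel) + lam * (\<integral>s. ind01 s * (Q s * q s) \<partial>lborel)"
  unfolding Jfun_def LBINT_01 ..

lemma square_convex_combination_le:
  fixes a b t :: real
  assumes "t \<in> {0..1}"
  shows "(t * a + (1 - t) * b)\<^sup>2 \<le> t * a\<^sup>2 + (1 - t) * b\<^sup>2"
proof -
  have "t * a\<^sup>2 + (1 - t) * b\<^sup>2 - (t * a + (1 - t) * b)\<^sup>2 = t * (1 - t) * (a - b)\<^sup>2"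
    by (simp add: power2_eq_square algebra_simps)
  moreover have "0 \<le> t * (1 - t) * (a - b)\<^sup>2" using assms by simp
  ultimately show ?thesis by linarith
qed

lemma Jfun_convex:
  assumes Q1: "L2_01 Q1" and Q2: "L2_01 Q2" and q: "L2_01 q" and t: "t \<in> {0..1}"
  shows "Jfun \<beta> lam q (\<lambda>s. t * Q1 s + (1 - t) * Q2 s) \<le> t * Jfun \<beta> lam q Q1 + (1 - t) * Jfun \<beta> lam q Q2"
proof -
  define A where "A Q = (\<integral>s. ind01 s * (Q s - \<beta>)\<^sup>2 \<partial>lborel)" for Q
  define B where "B Q = (\<integral>s. ind01 s * (Q s * q s) \<partial>lborel)" for Q
  have J: "Jfun \<beta> lam q Q = A Q + lam * B Q" for Q unfolding Jfun_eq A_def B_def ..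
  have "A (\<lambda>s. t * Q1 s + (1 - t) * Q2 s)
      \<le> (\<integral>s. t * (ind01 s * (Q1 s - \<beta>)\<^sup>2) + (1 - t) * (ind01 s * (Q2 s - \<beta>)\<^sup>2) \<partial>lborel)"
    unfolding A_def
  proof (rule integral_mono)
    show "integrable lborel (\<lambda>s. ind01 s * (t * Q1 s + (1 - t) * Q2 s - \<beta>)\<^sup>2)"
      using L2_01_lin[OF Q1 Q2] by (rule L2_01_integrable_sq_dist)
    show "integrable lborel (\<lambda>s. t * (ind01 s * (Q1 s - \<beta>)\<^sup>2) + (1 - t) * (ind01 s * (Q2 s - \<beta>)\<^sup>2))"
      using L2_01_integrable_sq_dist[OF Q1] L2_01_integrable_sq_dist[OF Q2] by simp
    fix s
    have "t * Q1 s + (1 - t) * Q2 s - \<beta> = t * (Q1 s - \<beta>) + (1 - t) * (Q2 s - \<beta>)" by (simp add: algebra_simps)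
    then show "ind01 s * (t * Q1 s + (1 - t) * Q2 s - \<beta>)\<^sup>2 \<le> t * (ind01 s * (Q1 s - \<beta>)\<^sup>2) + (1 - t) * (ind01 s * (Q2 s - \<beta>)\<^sup>2)"
      using square_convex_combination_le[OF t, of "Q1 s - \<beta>" "Q2 s - \<beta>"] by (simp add: indicator_def)
  qed
  also have "\<dots> = t * A Q1 + (1 - t) * A Q2"
    unfolding A_def using L2_01_integrable_sq_dist[OF Q1] L2_01_integrable_sq_dist[OF Q2] by simp
  finally have quadratic: "A (\<lambda>s. t * Q1 s + (1 - t) * Q2 s) \<le> t * A Q1 + (1 - t) * A Q2" .
  have "B (\<lambda>s. t * Q1 s + (1 - t) * Q2 s)
      = (\<integral>s. t * (ind01 s * (Q1 s * q s)) + (1 - t) * (ind01 s * (Q2 s * q s)) \<partial>lborel)"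
    unfolding B_def by (intro Bochner_Integration.integral_cong) (auto simp: algebra_simps)
  also have "\<dots> = t * B Q1 + (1 - t) * B Q2"
    unfolding B_def using L2_01_integrable_prod[OF Q1 q] L2_01_integrable_prod[OF Q2 q] by simp
  finally have linear: "B (\<lambda>s. t * Q1 s + (1 - t) * Q2 s) = t * B Q1 + (1 - t) * B Q2" .
  show ?thesis unfolding J linear using quadratic by (simp add: algebra_simps)
qed

lemma tendsto_min_real_of_nat: "(\<lambda>N. min x (real N)) \<longlonglongrightarrow> x"
proof (rule tendsto_eventually)
  obtain n :: nat where "x \<le> real n" using real_arch_simple by blast
  then show "\<forall>\<^sub>F N in sequentially. min x (real N) = x"
    unfolding eventually_sequentially by (intro exI[of _ n]) auto
qed

lemma sq_dist_min_le:
  fixes x N \<beta> :: real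
  assumes "0 \<le> N"
  shows "(min x N - \<beta>)\<^sup>2 \<le> (x - \<beta>)\<^sup>2 + \<beta>\<^sup>2"
proof (cases "x \<le> N")
  case False
  have "(N - \<beta>)\<^sup>2 \<le> (x - \<beta>)\<^sup>2 + \<beta>\<^sup>2"
  proof (cases "\<beta> \<le> N")
    case True
    then have "(N - \<beta>)\<^sup>2 \<le> (x - \<beta>)\<^sup>2" using False by (intro power_mono) auto
    then show ?thesis by (simp add: add_increasing2)
  next
    case False
    then have "(\<beta> - N)\<^sup>2 \<le> \<beta>\<^sup>2" using assms by (intro power_mono) auto
    then show ?thesis by (simp add: power2_commute add_increasing)
  qed
  then show ?thesis using False by simp
qed simp

lemma Jfun_truncation_tendsto:
  assumes Q: "L2_01 Q" and q: "L2_01 q"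
  shows "(\<lambda>N. Jfun \<beta> lam q (\<lambda>s. min (Q s) (real N))) \<longlonglongrightarrow> Jfun \<beta> lam q Q"
proof -
  have QN: "L2_01 (\<lambda>s. min (Q s) (real N))" for N using L2_01_min[OF Q] .
  have sq_dist_meas: "(\<lambda>s. ind01 s * (f s - \<beta>)\<^sup>2) \<in> borel_measurable lborel" if "L2_01 f" for f
    using L2_01_integrable_sq_dist[OF that] by auto
  have prod_meas: "(\<lambda>s. ind01 s * (f s * q s)) \<in> borel_measurable lborel" if "L2_01 f" for f
    using L2_01_integrable_prod[OF that q] by auto
  have "(\<lambda>N. \<integral>s. ind01 s * (min (Q s) (real N) - \<beta>)\<^sup>2 \<partial>lborel) \<longlonglongrightarrow> (\<integral>s. ind01 s * (Q s - \<beta>)\<^sup>2 \<partial>lborel)"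
  proof (rule integral_dominated_convergence[where w="\<lambda>s. ind01 s * (Q s - \<beta>)\<^sup>2 + ind01 s * \<beta>\<^sup>2"])
    show "integrable lborel (\<lambda>s. ind01 s * (Q s - \<beta>)\<^sup>2 + ind01 s * \<beta>\<^sup>2)"
      using L2_01_integrable_sq_dist[OF Q] L2_01_const[of \<beta>] unfolding L2_01_def by auto
    show "AE x in lborel. norm (ind01 x * (min (Q x) (real N) - \<beta>)\<^sup>2) \<le> ind01 x * (Q x - \<beta>)\<^sup>2 + ind01 x * \<beta>\<^sup>2" for N
      using sq_dist_min_le[of "real N"] by (simp add: indicator_def)
    show "AE x in lborel. (\<lambda>N. ind01 x * (min (Q x) (real N) - \<beta>)\<^sup>2) \<longlonglongrightarrow> ind01 x * (Q x - \<beta>)\<^sup>2"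
      by (intro AE_I2 tendsto_intros tendsto_min_real_of_nat)
  qed (fact sq_dist_meas[OF Q] sq_dist_meas[OF QN])+
  moreover have "(\<lambda>N. \<integral>s. ind01 s * (min (Q s) (real N) * q s) \<partial>lborel) \<longlonglongrightarrow> (\<integral>s. ind01 s * (Q s * q s) \<partial>lborel)"
  proof (rule integral_dominated_convergence[where w="\<lambda>s. \<bar>ind01 s * (Q s * q s)\<bar>"])
    show "integrable lborel (\<lambda>s. \<bar>ind01 s * (Q s * q s)\<bar>)" using L2_01_integrable_prod[OF Q q] by auto
    have "\<bar>min x N * y\<bar> \<le> \<bar>x * y\<bar>" if "0 \<le> N" for x y N :: real
      using that by (simp add: abs_mult mult_right_mono min_def)
    then show "AE x in lborel. norm (ind01 x * (min (Q x) (real N) * q x)) \<le> \<bar>ind01 x * (Q x * q x)\<bar>" for N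
      by (simp add: indicator_def)
    show "AE x in lborel. (\<lambda>N. ind01 x * (min (Q x) (real N) * q x)) \<longlonglongrightarrow> ind01 x * (Q x * q x)"
      by (intro AE_I2 tendsto_intros tendsto_min_real_of_nat)
  qed (fact prod_meas[OF Q] prod_meas[OF QN])+
  ultimately show ?thesis unfolding Jfun_eq by (intro tendsto_intros)
qed

section \<open>Tail averages of bounded increasing functions\<close>

definition bdd_incr :: "(real \<Rightarrow> real) \<Rightarrow> real \<Rightarrow> bool" where
  "bdd_incr Q B \<longleftrightarrow> mono_on {0..<1} Q \<and> (\<forall>t\<in>{0..<1}. \<bar>Q t\<bar> \<le> B) \<and>
     (\<lambda>x. indicator {0..<1} x * Q x) \<in> borel_measurable borel"

definition tail_integral :: "(real \<Rightarrow> real) \<Rightarrow> real \<Rightarrow> real" where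
  "tail_integral Q u = (\<integral>t. indicator {u<..<1} t * Q t \<partial>lborel)"
definition sup01 :: "(real \<Rightarrow> real) \<Rightarrow> real" where
  "sup01 Q = (SUP t\<in>{0..<1}. Q t)"
text \<open>The real value of \<^const>\<open>AQ\<close>; only meaningful for bounded \<open>Q\<close>, where \<^const>\<open>AQ\<close> is finite
  (\<^const>\<open>real_of_ereal\<close> sends \<open>\<plusminus>\<infinity>\<close> to \<open>0\<close>).\<close>
definition avg_tail :: "(real \<Rightarrow> real) \<Rightarrow> real \<Rightarrow> real" where
  "avg_tail Q s = real_of_ereal (AQ Q s)"

lemma bdd_incr_bound_nonneg: "bdd_incr Q B \<Longrightarrow> B \<ge> 0"
proof -
  assume "bdd_incr Q B"
  then have "\<bar>Q 0\<bar> \<le> B" unfolding bdd_incr_def by auto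
  then show "B \<ge> 0" by linarith
qed

lemma bdd_incr_integrable:
  assumes n: "bdd_incr Q B" and A: "A \<in> sets borel" and sub: "A \<subseteq> {0..<1}"
  shows "integrable lborel (\<lambda>t. indicator A t * Q t)"
proof -
  have eq: "(\<lambda>t. indicator A t * Q t) = (\<lambda>t. indicator A t * (indicator {0..<1} t * Q t))"
    using sub by (auto simp: indicator_def fun_eq_iff)
  have m1: "(\<lambda>t. indicator {0..<1} t * Q t) \<in> borel_measurable borel" using n unfolding bdd_incr_def by auto
  have m2: "(\<lambda>t. indicator A t :: real) \<in> borel_measurable borel" using A by simp
  have meas: "(\<lambda>t. indicator A t * Q t) \<in> borel_measurable lborel"
    unfolding eq using borel_measurable_times[OF m2 m1] by simp
  have "emeasure lborel A \<le> emeasure lborel {0..<1::real}"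
    using sub A by (intro emeasure_mono) auto
  then have fin: "emeasure lborel A < \<infinity>" by (auto simp: ennreal_less_top intro: le_less_trans)
  show ?thesis
    by (rule integrableI_bounded_set[of A _ _ B]) (use A meas fin n sub in \<open>auto simp: bdd_incr_def indicator_def\<close>)
qed

lemma sup01_bounds:
  assumes n: "bdd_incr Q B"
  shows "bdd_above (Q ` {0..<1})" "\<And>t. t \<in> {0..<1} \<Longrightarrow> Q t \<le> sup01 Q" "sup01 Q \<le> B" "- B \<le> sup01 Q"
proof -
  have b: "\<forall>t\<in>{0..<1}. \<bar>Q t\<bar> \<le> B" using n unfolding bdd_incr_def by auto
  show bd: "bdd_above (Q ` {0..<1})" using b by (auto intro!: bdd_aboveI[of _ B] simp: abs_le_iff)
  show "\<And>t. t \<in> {0..<1} \<Longrightarrow> Q t \<le> sup01 Q" unfolding sup01_def using bd by (intro cSUP_upper) auto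
  show "sup01 Q \<le> B" unfolding sup01_def using b by (intro cSUP_least) (auto simp: abs_le_iff)
  have "Q 0 \<le> sup01 Q" unfolding sup01_def using bd by (intro cSUP_upper) auto
  moreover have "\<bar>Q 0\<bar> \<le> B" using b by auto
  ultimately show "- B \<le> sup01 Q" by (auto simp: abs_le_iff)
qed

lemma AQ_0:
  assumes n: "bdd_incr Q B"
  shows "AQ Q 0 = ereal (sup01 Q)"
proof -
  have b: "\<forall>t\<in>{0..<1}. \<bar>Q t\<bar> \<le> B" using n unfolding bdd_incr_def by auto
  have "(SUP t\<in>{0..<1}. ereal (Q t)) \<le> ereal B"
    using b by (intro SUP_least) (auto simp: abs_le_iff)
  moreover have "ereal (Q 0) \<le> (SUP t\<in>{0..<1}. ereal (Q t))" by (intro SUP_upper) auto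
  ultimately have "\<bar>SUP t\<in>{0..<1}. ereal (Q t)\<bar> \<noteq> \<infinity>" by auto
  then show ?thesis unfolding AQ_def sup01_def by (simp add: ereal_SUP)
qed

lemma AQ_pos_eq:
  assumes s: "0 < s" "s \<le> 1"
  shows "AQ Q s = ereal ((1 / s) * tail_integral Q (1 - s))"
proof -
  have "(LBINT t=ereal (1 - s)..1. Q t) = (LINT t:einterval (ereal (1 - s)) 1|lborel. Q t)"
    using s by (intro interval_lebesgue_integral_le_eq) auto
  also have "einterval (ereal (1 - s)) 1 = {1-s<..<1}" by (auto simp: einterval_def)
  also have "(LINT t:{1-s<..<1}|lborel. Q t) = tail_integral Q (1 - s)" unfolding tail_integral_def set_lebesgue_integral_def by simp
  finally show ?thesis unfolding AQ_def using s by simp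
qed

lemma tail_integral_lipschitz:
  assumes n: "bdd_incr Q B" and uv: "0 \<le> u" "u \<le> v" "v \<le> 1"
  shows "\<bar>tail_integral Q u - tail_integral Q v\<bar> \<le> B * (v - u)"
proof -
  have iu: "integrable lborel (\<lambda>t. indicator {u<..<1} t * Q t)" using uv by (intro bdd_incr_integrable[OF n]) auto
  have iv: "integrable lborel (\<lambda>t. indicator {v<..<1} t * Q t)" using uv by (intro bdd_incr_integrable[OF n]) auto
  have "integrable lborel (\<lambda>t. B * indicator {u..v} t)"
    using uv by (intro integrable_mult_right integrable_real_indicator) (auto simp: emeasure_lborel_Icc)
  have b: "\<forall>t\<in>{0..<1}. \<bar>Q t\<bar> \<le> B" using n unfolding bdd_incr_def by auto
  have "\<bar>tail_integral Q u - tail_integral Q v\<bar> = \<bar>\<integral>t. indicator {u<..<1} t * Q t - indicator {v<..<1} t * Q t \<partial>lborel\<bar>"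
    unfolding tail_integral_def using iu iv by simp
  also have "\<dots> \<le> (\<integral>t. \<bar>indicator {u<..<1} t * Q t - indicator {v<..<1} t * Q t\<bar> \<partial>lborel)"
    by (rule integral_abs_bound)
  also have "\<dots> \<le> (\<integral>t. B * indicator {u..v} t \<partial>lborel)"
  proof (rule integral_mono)
    show "integrable lborel (\<lambda>t. \<bar>indicator {u<..<1} t * Q t - indicator {v<..<1} t * Q t\<bar>)"
      using iu iv by auto
    show "integrable lborel (\<lambda>t. B * indicator {u..v} t)" by fact
    fix t :: real
    show "\<bar>indicator {u<..<1} t * Q t - indicator {v<..<1} t * Q t\<bar> \<le> B * indicator {u..v} t"
      using b uv bdd_incr_bound_nonneg[OF n] by (auto simp: indicator_def)
  qed
  also have "\<dots> = B * (v - u)" using uv by simp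
  finally show ?thesis .
qed

lemma continuous_on_tail_integral:
  assumes n: "bdd_incr Q B"
  shows "continuous_on {0..1} (tail_integral Q)"
proof (rule lipschitz_on_continuous_on[of B], rule lipschitz_onI)
  show "dist (tail_integral Q x) (tail_integral Q y) \<le> B * dist x y" if "x \<in> {0..1}" "y \<in> {0..1}" for x y
    using tail_integral_lipschitz[OF n, of x y] tail_integral_lipschitz[OF n, of y x] that
    by (cases "x \<le> y") (auto simp: dist_real_def abs_minus_commute)
qed (rule bdd_incr_bound_nonneg[OF n])

lemma tail_integral_bounds:
  assumes n: "bdd_incr Q B" and s: "0 < s" "s \<le> 1"
  shows "s * Q (1 - s) \<le> tail_integral Q (1 - s)" "tail_integral Q (1 - s) \<le> s * sup01 Q"
proof -
  have i: "integrable lborel (\<lambda>t. indicator {1-s<..<1} t * Q t)" using s by (intro bdd_incr_integrable[OF n]) auto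
  have ic: "integrable lborel (\<lambda>t. indicator {1-s<..<1} t * c)" for c :: real
    using s by (intro integrable_mult_left integrable_real_indicator) (auto simp: emeasure_lborel_Ioo)
  have mono: "mono_on {0..<1} Q" using n unfolding bdd_incr_def by auto
  have meas: "(\<integral>t. indicator {1-s<..<1} t * c \<partial>lborel) = s * c" for c :: real
    using s by (simp add: integral_mult_left_zero)
  have "(\<integral>t. indicator {1-s<..<1} t * Q (1 - s) \<partial>lborel) \<le> tail_integral Q (1 - s)"
    unfolding tail_integral_def
  proof (rule integral_mono[OF ic i])
    fix t :: real show "indicator {1-s<..<1} t * Q (1 - s) \<le> indicator {1-s<..<1} t * Q t"
      using s by (auto simp: indicator_def intro!: mono_onD[OF mono])
  qed
  then show "s * Q (1 - s) \<le> tail_integral Q (1 - s)" using meas[of "Q (1 - s)"] by linarith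
  have "tail_integral Q (1 - s) \<le> (\<integral>t. indicator {1-s<..<1} t * sup01 Q \<partial>lborel)"
    unfolding tail_integral_def
  proof (rule integral_mono[OF i ic])
    fix t :: real show "indicator {1-s<..<1} t * Q t \<le> indicator {1-s<..<1} t * sup01 Q"
      using s sup01_bounds(2)[OF n, of t] by (auto simp: indicator_def)
  qed
  then show "tail_integral Q (1 - s) \<le> s * sup01 Q" using meas[of "sup01 Q"] by linarith
qed

lemma avg_tail_0: "bdd_incr Q B \<Longrightarrow> avg_tail Q 0 = sup01 Q"
  unfolding avg_tail_def using AQ_0 by simp

lemma avg_tail_pos: "0 < s \<Longrightarrow> s \<le> 1 \<Longrightarrow> avg_tail Q s = tail_integral Q (1 - s) / s"
  unfolding avg_tail_def using AQ_pos_eq by simp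

lemma AQ_eq_avg_tail: "bdd_incr Q B \<Longrightarrow> s \<in> {0..1} \<Longrightarrow> AQ Q s = ereal (avg_tail Q s)"
  unfolding avg_tail_def using AQ_0[of Q B] AQ_pos_eq[of s Q] by (cases "s = 0") auto

lemma avg_tail_bound:
  assumes n: "bdd_incr Q B" and s: "s \<in> {0..1}"
  shows "\<bar>avg_tail Q s\<bar> \<le> B"
proof (cases "s = 0")
  case True then show ?thesis using avg_tail_0[OF n] sup01_bounds[OF n] by auto
next
  case False
  then have s': "0 < s" "s \<le> 1" using s by auto
  have b: "\<bar>Q (1 - s)\<bar> \<le> B" using n s' unfolding bdd_incr_def by auto
  have "s * (- B) \<le> s * Q (1 - s)" using b s' by (intro mult_left_mono) auto
  then have "s * (- B) \<le> tail_integral Q (1 - s)" using tail_integral_bounds(1)[OF n s'] by linarith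
  moreover have "s * sup01 Q \<le> s * B" using sup01_bounds(3)[OF n] s' by (intro mult_left_mono) auto
  then have "tail_integral Q (1 - s) \<le> s * B" using tail_integral_bounds(2)[OF n s'] by linarith
  ultimately have "- B \<le> tail_integral Q (1 - s) / s" "tail_integral Q (1 - s) / s \<le> B" using s'
    by (simp_all add: field_simps)
  then show ?thesis using avg_tail_pos[OF s'] by auto
qed

lemma avg_tail_tendsto_0:
  assumes n: "bdd_incr Q B"
  shows "(avg_tail Q \<longlongrightarrow> sup01 Q) (at_right 0)"
proof (rule order_tendstoI)
  fix a assume a: "a > sup01 Q"
  have "eventually (\<lambda>s. s \<in> {0<..<1}) (at_right (0::real))"
    by (simp add: eventually_at_right_field) (auto intro!: exI[of _ 1])
  then show "eventually (\<lambda>s. avg_tail Q s < a) (at_right 0)"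
  proof eventually_elim
    case (elim s)
    then have "avg_tail Q s = tail_integral Q (1 - s) / s" using avg_tail_pos by auto
    also have "\<dots> \<le> sup01 Q" using tail_integral_bounds(2)[OF n, of s] elim by (simp add: divide_le_eq mult.commute)
    finally show ?case using a by simp
  qed
next
  fix a assume a: "a < sup01 Q"
  obtain t0 where t0: "t0 \<in> {0..<1}" "a < Q t0"
    using a less_cSUP_iff[of "{0..<1}" Q a] sup01_bounds(1)[OF n] unfolding sup01_def by auto
  have mono: "mono_on {0..<1} Q" using n unfolding bdd_incr_def by auto
  have "eventually (\<lambda>s. s \<in> {0<..<1 - t0}) (at_right (0::real))"
    using t0 by (simp add: eventually_at_right_field) (auto intro!: exI[of _ "1 - t0"])
  then show "eventually (\<lambda>s. a < avg_tail Q s) (at_right 0)"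
  proof eventually_elim
    case (elim s)
    then have s: "0 < s" "s \<le> 1" using t0 by auto
    have "Q t0 \<le> Q (1 - s)" using elim t0 by (intro mono_onD[OF mono]) auto
    then have "a < Q (1 - s)" using t0 by simp
    also have "Q (1 - s) \<le> tail_integral Q (1 - s) / s" using tail_integral_bounds(1)[OF n s] s by (simp add: le_divide_eq mult.commute)
    finally show ?case using avg_tail_pos[OF s] by simp
  qed
qed

lemma continuous_on_avg_tail:
  assumes n: "bdd_incr Q B"
  shows "continuous_on {0..1} (avg_tail Q)"
proof -
  have c1: "continuous_on {0<..1} (\<lambda>s. tail_integral Q (1 - s) / s)"
  proof (intro continuous_on_divide)
    show "continuous_on {0<..1} (\<lambda>s. tail_integral Q (1 - s))"
      by (rule continuous_on_compose2[OF continuous_on_tail_integral[OF n]]) (auto intro!: continuous_intros)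
  qed (auto intro!: continuous_intros)
  have c2: "continuous_on {0<..1} (avg_tail Q)"
    by (rule continuous_on_eq[OF c1]) (auto simp: avg_tail_pos)
  show ?thesis
    unfolding continuous_on_eq_continuous_within
  proof
    fix x :: real assume x: "x \<in> {0..1}"
    show "continuous (at x within {0..1}) (avg_tail Q)"
    proof (cases "x = 0")
      case True
      have "at (0::real) within {0..1} = at_right 0" by (rule at_within_Icc_at_right) auto
      then show ?thesis using True avg_tail_tendsto_0[OF n] avg_tail_0[OF n] by (simp add: continuous_within)
    next
      case False
      then have xp: "x > 0" using x by auto
      have "at x within {0..1} = at x within {0<..1}"
        by (rule at_within_nhd[of _ "{0<..}"]) (use xp in auto)
      moreover have "continuous (at x within {0<..1}) (avg_tail Q)"
        using c2 x xp by (auto simp: continuous_on_eq_continuous_within)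
      ultimately show ?thesis by simp
    qed
  qed
qed

lemma bdd_incr_lin:
  assumes n1: "bdd_incr Q1 B1" and n2: "bdd_incr Q2 B2" and c: "c1 \<ge> 0" "c2 \<ge> 0"
  shows "bdd_incr (\<lambda>t. c1 * Q1 t + c2 * Q2 t) (c1 * B1 + c2 * B2)"
proof -
  have m1: "mono_on {0..<1} Q1" and m2: "mono_on {0..<1} Q2" using n1 n2 unfolding bdd_incr_def by auto
  have "mono_on {0..<1} (\<lambda>t. c1 * Q1 t + c2 * Q2 t)"
    by (intro mono_onI add_mono mult_left_mono mono_onD[OF m1] mono_onD[OF m2]) (use c in auto)
  moreover have "\<bar>c1 * Q1 t + c2 * Q2 t\<bar> \<le> c1 * B1 + c2 * B2" if "t \<in> {0..<1}" for t
  proof -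
    have "\<bar>c1 * Q1 t + c2 * Q2 t\<bar> \<le> c1 * \<bar>Q1 t\<bar> + c2 * \<bar>Q2 t\<bar>"
      using abs_triangle_ineq[of "c1 * Q1 t" "c2 * Q2 t"] c by (simp add: abs_mult)
    also have "\<dots> \<le> c1 * B1 + c2 * B2"
      using that n1 n2 c unfolding bdd_incr_def by (intro add_mono mult_left_mono) auto
    finally show ?thesis .
  qed
  moreover have "(\<lambda>x. indicator {0..<1} x * (c1 * Q1 x + c2 * Q2 x))
      = (\<lambda>x. c1 * (indicator {0..<1} x * Q1 x) + c2 * (indicator {0..<1} x * Q2 x))"
    by (auto simp: fun_eq_iff algebra_simps)
  ultimately show ?thesis using n1 n2 unfolding bdd_incr_def by auto
qed

lemma avg_tail_lin:
  assumes n1: "bdd_incr Q1 B1" and n2: "bdd_incr Q2 B2" and c: "c1 \<ge> 0" "c2 \<ge> 0" and s: "s \<in> {0..1}"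
  shows "avg_tail (\<lambda>t. c1 * Q1 t + c2 * Q2 t) s = c1 * avg_tail Q1 s + c2 * avg_tail Q2 s"
proof -
  define Q where "Q = (\<lambda>t. c1 * Q1 t + c2 * Q2 t)"
  have n: "bdd_incr Q (c1 * B1 + c2 * B2)" unfolding Q_def by (rule bdd_incr_lin[OF n1 n2 c])
  have pos: "avg_tail Q s = c1 * avg_tail Q1 s + c2 * avg_tail Q2 s" if s: "0 < s" "s \<le> 1" for s
  proof -
    have "integrable lborel (\<lambda>t. indicator {1-s<..<1} t * Q1 t)" "integrable lborel (\<lambda>t. indicator {1-s<..<1} t * Q2 t)"
      using s by (intro bdd_incr_integrable[OF n1] bdd_incr_integrable[OF n2]; auto)+
    then have "tail_integral Q (1 - s) = c1 * tail_integral Q1 (1 - s) + c2 * tail_integral Q2 (1 - s)"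
      unfolding tail_integral_def Q_def by (simp add: algebra_simps)
    then show ?thesis using avg_tail_pos[OF s] by (simp add: add_divide_distrib)
  qed
  text \<open>At \<open>s = 0\<close> both sides are the right limits of the two sides at positive \<open>s\<close>.\<close>
  have "avg_tail Q 0 = c1 * avg_tail Q1 0 + c2 * avg_tail Q2 0"
  proof (rule tendsto_unique[OF trivial_limit_at_right_real])
    show "(avg_tail Q \<longlongrightarrow> avg_tail Q 0) (at_right 0)" using avg_tail_tendsto_0[OF n] avg_tail_0[OF n] by simp
    have "eventually (\<lambda>s. s \<in> {0<..<1}) (at_right (0::real))"
      by (simp add: eventually_at_right_field) (auto intro!: exI[of _ 1])
    then have ev: "eventually (\<lambda>s. c1 * avg_tail Q1 s + c2 * avg_tail Q2 s = avg_tail Q s) (at_right (0::real))"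
      by eventually_elim (use pos in auto)
    have "((\<lambda>s. c1 * avg_tail Q1 s + c2 * avg_tail Q2 s) \<longlongrightarrow> c1 * avg_tail Q1 0 + c2 * avg_tail Q2 0) (at_right 0)"
      using avg_tail_tendsto_0[OF n1] avg_tail_tendsto_0[OF n2] avg_tail_0[OF n1] avg_tail_0[OF n2]
      by (auto intro!: tendsto_intros)
    from this ev show "(avg_tail Q \<longlongrightarrow> c1 * avg_tail Q1 0 + c2 * avg_tail Q2 0) (at_right 0)"
      by (rule Lim_transform_eventually)
  qed
  then show ?thesis using pos s unfolding Q_def[symmetric] by (cases "s = 0") auto
qed

section \<open>Quantile functions\<close>

definition gen_inv :: "(real \<Rightarrow> real) \<Rightarrow> real \<Rightarrow> real" where
  "gen_inv C t = Inf {y. t < C y}"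

lemma quantile_eq_gen_inv_cdf:
  assumes "X \<in> borel_measurable P"
  shows "quantile P X = gen_inv (cdf (distr P borel X))"
proof
  fix t
  have "cdf (distr P borel X) y = measure P {\<omega>\<in>space P. X \<omega> \<le> y}" for y
  proof -
    have "cdf (distr P borel X) y = measure P (X -` {..y} \<inter> space P)"
      unfolding cdf_def using assms by (subst measure_distr) auto
    also have "X -` {..y} \<inter> space P = {\<omega>\<in>space P. X \<omega> \<le> y}" by auto
    finally show ?thesis .
  qed
  then show "quantile P X t = gen_inv (cdf (distr P borel X)) t" unfolding quantile_def gen_inv_def by simp
qed

context real_distribution
begin

lemma gen_inv_cdf_bdd_below:
  assumes "0 < t"
  shows "bdd_below {y. t < cdf M y}"
proof -
  obtain y0 where y0: "\<And>y. y \<le> y0 \<Longrightarrow> cdf M y < t"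
    using order_tendstoD(2)[OF cdf_lim_at_bot assms] by (auto simp: eventually_at_bot_linorder)
  have "y0 \<le> y" if "t < cdf M y" for y using y0[of y] that by fastforce
  then show ?thesis by (intro bdd_belowI[where m = y0]) auto
qed

lemma gen_inv_cdf_nonempty:
  assumes "t < 1"
  shows "{y. t < cdf M y} \<noteq> {}"
  using order_tendstoD(1)[OF cdf_lim_at_top_prob assms] by (auto simp: eventually_at_top_linorder)

lemma gen_inv_cdf_le: "0 < t \<Longrightarrow> t < cdf M x \<Longrightarrow> gen_inv (cdf M) t \<le> x"
  unfolding gen_inv_def by (intro cInf_lower gen_inv_cdf_bdd_below) auto

text \<open>The converse of \<open>gen_inv_cdf_le\<close> up to the boundary case \<open>t = cdf M x\<close>; it is
  where right continuity of the distribution function enters.\<close>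
lemma le_cdf_if_gen_inv_le:
  assumes "t < 1" and le: "gen_inv (cdf M) t \<le> x"
  shows "t \<le> cdf M x"
proof (rule ccontr)
  assume "\<not> t \<le> cdf M x"
  moreover have "(cdf M \<longlongrightarrow> cdf M x) (at_right x)" using cdf_is_right_cont[of x] by (simp add: continuous_within)
  ultimately have "eventually (\<lambda>y. cdf M y < t) (at_right x)" using order_tendstoD(2) by force
  then obtain b where "x < b" and b: "\<And>y. x < y \<Longrightarrow> y < b \<Longrightarrow> cdf M y < t"
    by (auto simp: eventually_at_right_field)
  have "(x + b) / 2 \<le> z" if "t < cdf M z" for z
  proof (rule ccontr)
    assume "\<not> (x + b) / 2 \<le> z"
    then have "cdf M z \<le> cdf M ((x + b) / 2)" by (intro cdf_nondecreasing) simp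
    then show False using b[of "(x + b) / 2"] \<open>x < b\<close> that by simp
  qed
  then have "(x + b) / 2 \<le> gen_inv (cdf M) t"
    unfolding gen_inv_def using gen_inv_cdf_nonempty[OF assms(1)] by (intro cInf_greatest) auto
  then show False using le \<open>x < b\<close> by simp
qed

lemma mono_on_gen_inv_cdf: "mono_on {0<..<1} (gen_inv (cdf M))"
  unfolding gen_inv_def
  by (intro mono_onI cInf_superset_mono gen_inv_cdf_nonempty gen_inv_cdf_bdd_below) auto

lemma distr_gen_inv_cdf: "distr (restrict_space lborel {0<..<1}) borel (gen_inv (cdf M)) = M"
proof -
  let ?U = "restrict_space lborel {0<..<1::real}"
  let ?q = "gen_inv (cdf M)"
  interpret U: prob_space ?U
    by (auto simp: emeasure_restrict_space space_restrict_space intro!: prob_spaceI)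
  have q_meas: "?q \<in> ?U \<rightarrow>\<^sub>M borel"
    using borel_measurable_mono_on_fnc[OF mono_on_gen_inv_cdf]
    by (simp add: measurable_cong_sets[OF sets_restrict_space_cong[OF sets_lborel] refl])
  show ?thesis
  proof (intro cdf_unique ext)
    show "real_distribution (distr ?U borel ?q)" using q_meas by (intro U.real_distribution_distr) auto
    show "real_distribution M" by unfold_locales
    fix x
    define A where "A = {t\<in>{0<..<1}. ?q t \<le> x}"
    have A_eq: "?q -` {..x} \<inter> space ?U = A" unfolding A_def by (auto simp: space_restrict_space)
    have "A \<in> sets ?U" unfolding A_eq[symmetric] using q_meas by (intro measurable_sets) auto
    then have A_sets: "A \<in> sets lborel" by (auto simp: sets_restrict_space)
    have sub: "{0<..<cdf M x} \<subseteq> A" "A \<subseteq> {0<..cdf M x}"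
      using gen_inv_cdf_le[of _ x] le_cdf_if_gen_inv_le[of _ x] cdf_bounded_prob[of x] unfolding A_def by auto
    have "emeasure lborel A \<le> emeasure lborel {0<..<1::real}"
      using A_sets by (intro emeasure_mono) (auto simp: A_def)
    then have "A \<in> fmeasurable lborel"
      using A_sets by (auto simp: fmeasurable_def top.not_eq_extremum le_less_trans)
    then have "measure lborel {0<..<cdf M x} \<le> measure lborel A"
      using sub(1) by (intro measure_mono_fmeasurable) (auto simp: fmeasurable_def)
    moreover have "measure lborel A \<le> measure lborel {0<..cdf M x}"
      using sub(2) A_sets cdf_nonneg[of x]
      by (intro measure_mono_fmeasurable) (auto simp: fmeasurable_def emeasure_lborel_Ioc)
    ultimately have "measure lborel A = cdf M x" using cdf_nonneg[of x] by simp
    moreover have "cdf (distr ?U borel ?q) x = measure ?U A"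
      unfolding cdf_def[of "distr ?U borel ?q"] using q_meas A_eq by (subst measure_distr) auto
    moreover have "measure ?U A = measure lborel A" by (subst measure_restrict_space) (auto simp: A_def)
    ultimately show "cdf (distr ?U borel ?q) x = cdf M x" by simp
  qed
qed

end

lemma quantile_L2_01:
  assumes P: "prob_space P" and X: "X \<in> borel_measurable P" and sq: "integrable P (\<lambda>\<omega>. (X \<omega>)\<^sup>2)"
  shows "L2_01 (quantile P X)"
proof -
  interpret P: prob_space P by fact
  define D where "D = distr P borel X"
  interpret D: real_distribution D unfolding D_def using X by (intro P.real_distribution_distr) auto
  let ?U = "restrict_space lborel {0<..<1::real}"
  let ?q = "gen_inv (cdf D)"
  have q_meas: "?q \<in> borel_measurable (restrict_space borel {0<..<1})"
    by (rule borel_measurable_mono_on_fnc[OF D.mono_on_gen_inv_cdf])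
  then have "?q \<in> ?U \<rightarrow>\<^sub>M borel"
    by (simp add: measurable_cong_sets[OF sets_restrict_space_cong[OF sets_lborel] refl])
  moreover have "integrable (distr ?U borel ?q) (\<lambda>x. x\<^sup>2)"
    unfolding D.distr_gen_inv_cdf unfolding D_def using X sq by (subst integrable_distr_eq) auto
  ultimately have "integrable ?U (\<lambda>t. (?q t)\<^sup>2)" by (subst (asm) integrable_distr_eq) auto
  then have "integrable lborel (\<lambda>t. ind01 t * (?q t)\<^sup>2)" by (subst (asm) integrable_restrict_space) auto
  moreover have "(\<lambda>t. ind01 t * ?q t) \<in> borel_measurable borel"
    using q_meas by (subst (asm) borel_measurable_restrict_space_iff) auto
  ultimately show ?thesis unfolding L2_01_def quantile_eq_gen_inv_cdf[OF X] D_def by simp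
qed

lemma quantile_bdd_incr:
  assumes P: "prob_space P" and X: "X \<in> borel_measurable P" and bound: "AE \<omega> in P. \<bar>X \<omega>\<bar> \<le> C"
  shows "bdd_incr (quantile P X) C"
proof -
  interpret P: prob_space P by fact
  define F where "F y = measure P {\<omega>\<in>space P. X \<omega> \<le> y}" for y
  have q: "quantile P X t = Inf {y. t < F y}" for t unfolding quantile_def F_def by simp
  have sets: "{\<omega>\<in>space P. X \<omega> \<le> y} \<in> sets P" for y using X by measurable
  have F1: "F y = 1" if "C \<le> y" for y
  proof -
    have "AE \<omega> in P. X \<omega> \<le> y" using bound by eventually_elim (use that in auto)
    then show ?thesis unfolding F_def using P.prob_Collect_eq_1[OF sets] by simp
  qed
  have F0: "F y = 0" if "y < - C" for y
  proof -
    have "AE \<omega> in P. \<not> X \<omega> \<le> y" using bound by eventually_elim (use that in auto)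
    then show ?thesis unfolding F_def using P.prob_Collect_eq_0[OF sets] by simp
  qed
  have ne: "C \<in> {y. t < F y}" if "t < 1" for t using F1[of C] that by auto
  have lb: "- C \<le> y" if "0 \<le> t" "t < F y" for t y using F0[of y] that by force
  have bdd: "bdd_below {y. t < F y}" if "0 \<le> t" for t using lb[OF that] by (intro bdd_belowI[where m = "- C"]) auto
  have mono: "mono_on {0..<1} (quantile P X)"
    unfolding q by (intro mono_onI cInf_superset_mono) (use ne bdd in auto)
  have "\<bar>quantile P X t\<bar> \<le> C" if "t \<in> {0..<1}" for t
  proof -
    have "quantile P X t \<le> C" unfolding q using that ne bdd by (intro cInf_lower) auto
    moreover have "- C \<le> quantile P X t" unfolding q using that ne lb by (intro cInf_greatest) auto
    ultimately show ?thesis by linarith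
  qed
  moreover have "(\<lambda>x. indicator {0..<1} x * quantile P X x) \<in> borel_measurable borel"
    using borel_measurable_mono_on_fnc[OF mono] by (subst (asm) borel_measurable_restrict_space_iff) auto
  ultimately show ?thesis unfolding bdd_incr_def using mono by auto
qed

section \<open>Extended-real integrals\<close>

lemma ereal_integral_cong_AE:
  assumes "AE x in m. f x = g x"
  shows "ereal_integral m f = ereal_integral m g"
proof -
  have "AE x in m. e2ennreal (f x) = e2ennreal (g x)" "AE x in m. e2ennreal (- f x) = e2ennreal (- g x)"
    using assms by (auto elim: eventually_mono)
  then show ?thesis unfolding ereal_integral_def by (simp add: nn_integral_cong_AE)
qed

lemma ereal_integral_real:
  fixes h :: "'b \<Rightarrow> real"
  assumes "integrable m h"
  shows "ereal_integral m (\<lambda>x. ereal (h x)) = ereal (\<integral>x. h x \<partial>m)"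
proof -
  have pos: "integrable m (\<lambda>x. max 0 (h x))" and neg: "integrable m (\<lambda>x. max 0 (- h x))" using assms by auto
  have "(\<integral>\<^sup>+x. e2ennreal (ereal (h x)) \<partial>m) = ennreal (\<integral>x. max 0 (h x) \<partial>m)"
    using pos by (subst nn_integral_eq_integral[symmetric])
      (auto intro!: nn_integral_cong simp: e2ennreal_ereal max_def ennreal_neg)
  moreover have "(\<integral>\<^sup>+x. e2ennreal (- ereal (h x)) \<partial>m) = ennreal (\<integral>x. max 0 (- h x) \<partial>m)"
    using neg by (subst nn_integral_eq_integral[symmetric])
      (auto intro!: nn_integral_cong simp: e2ennreal_ereal max_def ennreal_neg)
  moreover have "(\<integral>x. h x \<partial>m) = (\<integral>x. max 0 (h x) - max 0 (- h x) \<partial>m)"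
    by (intro Bochner_Integration.integral_cong) auto
  then have "(\<integral>x. h x \<partial>m) = (\<integral>x. max 0 (h x) \<partial>m) - (\<integral>x. max 0 (- h x) \<partial>m)"
    using pos neg by simp
  ultimately show ?thesis unfolding ereal_integral_def by (simp add: enn2ereal_ennreal)
qed

lemma e2ennreal_add_bound:
  fixes h :: ereal and B :: real
  assumes "0 \<le> B" and "- ereal B \<le> h"
  shows "e2ennreal (h + ereal B) = e2ennreal h + (ennreal B - e2ennreal (- h))"
    and "e2ennreal (- h) \<le> ennreal B"
proof -
  show "e2ennreal (h + ereal B) = e2ennreal h + (ennreal B - e2ennreal (- h))"
    using assms by (cases h; cases "0 \<le> real_of_ereal h") (auto simp: e2ennreal_ereal ennreal_neg ennreal_plus ennreal_minus)
  show "e2ennreal (- h) \<le> ennreal B"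
    using assms by (cases h) (auto simp: e2ennreal_ereal e2ennreal_neg ennreal_leI)
qed

lemma ereal_integral_shift:
  fixes h :: "'b \<Rightarrow> ereal"
  assumes "prob_space m" and h_meas: "h \<in> borel_measurable m" and "0 \<le> B"
    and lower: "\<And>x. - ereal B \<le> h x"
  shows "ereal_integral m h = enn2ereal (\<integral>\<^sup>+x. e2ennreal (h x + ereal B) \<partial>m) - ereal B"
proof -
  interpret prob_space m by fact
  note shift = e2ennreal_add_bound[OF \<open>0 \<le> B\<close> lower]
  define pos where "pos = (\<integral>\<^sup>+x. e2ennreal (h x) \<partial>m)"
  define neg where "neg = (\<integral>\<^sup>+x. e2ennreal (- h x) \<partial>m)"
  have neg_meas: "(\<lambda>x. e2ennreal (- h x)) \<in> borel_measurable m" using h_meas by measurable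
  have "neg \<le> (\<integral>\<^sup>+x. ennreal B \<partial>m)" unfolding neg_def using shift(2) by (intro nn_integral_mono) auto
  then have neg_le: "neg \<le> ennreal B" by (simp add: emeasure_space_1)
  then obtain n where n: "neg = ennreal n" "0 \<le> n" "n \<le> B"
    using \<open>0 \<le> B\<close> by (cases neg rule: ennreal_cases) (auto simp: ennreal_le_iff top_unique)
  have "(\<integral>\<^sup>+x. e2ennreal (h x + ereal B) \<partial>m) = pos + (\<integral>\<^sup>+x. ennreal B - e2ennreal (- h x) \<partial>m)"
    unfolding pos_def shift(1) using h_meas neg_meas by (intro nn_integral_add) auto
  also have "(\<integral>\<^sup>+x. ennreal B - e2ennreal (- h x) \<partial>m) = ennreal B - neg"
    unfolding neg_def using neg_meas shift(2) neg_le n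
    by (subst nn_integral_diff) (auto simp: emeasure_space_1 neg_def)
  also have "ennreal B - neg = ennreal (B - n)" using n by (simp add: ennreal_minus)
  finally have "enn2ereal (\<integral>\<^sup>+x. e2ennreal (h x + ereal B) \<partial>m) - ereal B = enn2ereal pos - ereal n"
    using n by (cases "enn2ereal pos") (auto simp: plus_ennreal.rep_eq enn2ereal_ennreal)
  then show ?thesis unfolding ereal_integral_def pos_def[symmetric] neg_def[symmetric] n(1)
    using n by (simp add: enn2ereal_ennreal)
qed

section \<open>Truncation\<close>

lemma ereal_integral_AQ_bdd_incr:
  assumes "bdd_incr Q B" and "m \<in> M1Set"
  shows "ereal_integral m (\<lambda>s. if s \<in> {0..1} then AQ Q s else 0) = ereal (unit_integral (avg_tail Q) m)"
proof -
  have "AE s in m. (if s \<in> {0..1} then AQ Q s else 0) = ereal (avg_tail Q (clamp01 s))"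
    using M1Set_D(5)[OF assms(2)] by eventually_elim (auto simp: clamp01_id AQ_eq_avg_tail[OF assms(1)])
  then show ?thesis unfolding unit_integral_def
    using integrable_clamp01_comp[OF continuous_on_avg_tail[OF assms(1)] assms(2)]
    by (simp add: ereal_integral_cong_AE ereal_integral_real)
qed

definition trunc :: "(real \<Rightarrow> real) \<Rightarrow> nat \<Rightarrow> real \<Rightarrow> real" where
  "trunc Q N x = min (Q x) (real N)"

definition AQ_ind :: "(real \<Rightarrow> real) \<Rightarrow> real \<Rightarrow> ereal" where
  "AQ_ind Q s = (if s \<in> {0..1} then AQ Q s else 0)"

lemma QSet_iff:
  "Q \<in> QSet \<longleftrightarrow> mono_on {0..<1} Q \<and> (\<forall>t\<in>{0..<1}. continuous (at_right t) Q) \<and>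
     (\<lambda>x. indicator {0..<1} x * Q x) \<in> borel_measurable borel \<and>
     integrable lborel (\<lambda>x. indicator {0..<1} x * (Q x)\<^sup>2)"
  unfolding QSet_def set_borel_measurable_def set_integrable_def by simp

lemma trunc_mono: "N \<le> M \<Longrightarrow> trunc Q N x \<le> trunc Q M x"
  unfolding trunc_def by (auto simp: min_def)

lemma trunc_tendsto: "(\<lambda>N. trunc Q N x) \<longlonglongrightarrow> Q x"
  unfolding trunc_def by (rule tendsto_min_real_of_nat)

lemma trunc_bdd_incr:
  assumes "Q \<in> QSet"
  shows "bdd_incr (trunc Q N) (max \<bar>Q 0\<bar> (real N))"
proof -
  have mono: "mono_on {0..<1} Q" and meas: "(\<lambda>x. indicator {0..<1} x * Q x) \<in> borel_measurable borel"
    using assms unfolding QSet_iff by auto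
  have "(\<lambda>x. indicator {0..<1} x * trunc Q N x) = (\<lambda>x. min (indicator {0..<1} x * Q x) (indicator {0..<1} x * real N))"
    unfolding trunc_def by (auto simp: fun_eq_iff indicator_def)
  then have "(\<lambda>x. indicator {0..<1} x * trunc Q N x) \<in> borel_measurable borel" using meas by simp
  moreover have "mono_on {0..<1} (trunc Q N)"
    unfolding trunc_def by (intro mono_onI min.mono mono_onD[OF mono]) auto
  moreover have "\<bar>trunc Q N t\<bar> \<le> max \<bar>Q 0\<bar> (real N)" if "t \<in> {0..<1}" for t
    using mono_onD[OF mono, of 0 t] that unfolding trunc_def by (auto simp: min_def)
  ultimately show ?thesis unfolding bdd_incr_def by auto
qed

lemma bdd_incr_sq_integrable:
  assumes "bdd_incr Q B"
  shows "integrable lborel (\<lambda>x. indicator {0..<1} x * (Q x)\<^sup>2)"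
proof (rule integrableI_bounded_set[of "{0..<1}" _ _ "B\<^sup>2"])
  have "(\<lambda>x. indicator {0..<1} x * (Q x)\<^sup>2) = (\<lambda>x. (indicator {0..<1} x * Q x)\<^sup>2)"
    by (auto simp: fun_eq_iff indicator_def)
  moreover have "(\<lambda>x. indicator {0..<1} x * Q x) \<in> borel_measurable borel" using assms unfolding bdd_incr_def by simp
  ultimately show "(\<lambda>x. indicator {0..<1} x * (Q x)\<^sup>2) \<in> borel_measurable lborel"
    using borel_measurable_power by simp
  have "(Q x)\<^sup>2 \<le> B\<^sup>2" if "x \<in> {0..<1}" for x
    using assms that unfolding bdd_incr_def by (metis abs_ge_zero power2_abs power_mono)
  then show "AE x\<in>{0..<1} in lborel. norm (indicator {0..<1} x * (Q x)\<^sup>2) \<le> B\<^sup>2" by auto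
qed (auto simp: emeasure_lborel_Ico indicator_def)

lemma bdd_incr_QSet:
  assumes "bdd_incr Q B" and "\<And>t. t \<in> {0..<1} \<Longrightarrow> continuous (at_right t) Q"
  shows "Q \<in> QSet"
  using assms bdd_incr_sq_integrable[OF assms(1)] unfolding QSet_iff bdd_incr_def by auto

lemma trunc_QSet:
  assumes "Q \<in> QSet"
  shows "trunc Q N \<in> QSet"
proof (rule bdd_incr_QSet[OF trunc_bdd_incr[OF assms]])
  show "continuous (at_right t) (trunc Q N)" if "t \<in> {0..<1}" for t
    using assms that unfolding QSet_iff trunc_def by (auto intro!: continuous_intros)
qed

lemma L2_01_integrable_tail:
  assumes "L2_01 f" and "0 \<le> u"
  shows "integrable lborel (\<lambda>x. indicator {u<..<1} x * f x)"
proof -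
  have eq: "indicator {u<..<1} x * f x = indicator {u<..<1} x * (ind01 x * f x)" for x
    using assms(2) by (auto simp: indicator_def)
  show ?thesis unfolding eq
  proof (rule Bochner_Integration.integrable_bound[OF L2_01_integrable[OF assms(1)]])
    show "(\<lambda>x. indicator {u<..<1} x * (ind01 x * f x)) \<in> borel_measurable lborel"
      using L2_01_measurable[OF assms(1)] by simp
  qed (auto simp: indicator_def)
qed

lemma tail_integral_trunc_tendsto:
  assumes "Q \<in> QSet" and "0 \<le> u"
  shows "(\<lambda>N. tail_integral (trunc Q N) u) \<longlonglongrightarrow> tail_integral Q u"
  unfolding tail_integral_def
proof (rule integral_dominated_convergence[where w="\<lambda>x. \<bar>indicator {u<..<1} x * Q x\<bar>"])
  have L: "L2_01 Q" by (rule QSet_L2_01[OF assms(1)])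
  then show "integrable lborel (\<lambda>x. \<bar>indicator {u<..<1} x * Q x\<bar>)"
    using L2_01_integrable_tail[OF _ assms(2)] by auto
  show "(\<lambda>x. indicator {u<..<1} x * Q x) \<in> borel_measurable lborel"
    using L2_01_integrable_tail[OF L assms(2)] by auto
  show "(\<lambda>x. indicator {u<..<1} x * trunc Q N x) \<in> borel_measurable lborel" for N
    using L2_01_integrable_tail[OF L2_01_min[OF L] assms(2)] by (auto simp: trunc_def)
  show "AE x in lborel. (\<lambda>N. indicator {u<..<1} x * trunc Q N x) \<longlonglongrightarrow> indicator {u<..<1} x * Q x"
    by (intro AE_I2 tendsto_intros trunc_tendsto)
  show "AE x in lborel. norm (indicator {u<..<1} x * trunc Q N x) \<le> \<bar>indicator {u<..<1} x * Q x\<bar>" for N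
    by (intro AE_I2) (auto simp: indicator_def trunc_def min_def)
qed

lemma AQ_trunc_incseq:
  assumes "Q \<in> QSet" and s: "s \<in> {0..1}"
  shows "incseq (\<lambda>N. AQ (trunc Q N) s)"
proof (intro incseq_SucI)
  fix N
  show "AQ (trunc Q N) s \<le> AQ (trunc Q (Suc N)) s"
  proof (cases "s = 0")
    case True
    then show ?thesis unfolding AQ_def by (simp, intro SUP_mono) (auto intro!: bexI simp: trunc_mono)
  next
    case False
    then have "0 < s" "s \<le> 1" using s by auto
    have "L2_01 (trunc Q n)" for n unfolding trunc_def by (intro L2_01_min QSet_L2_01 assms(1))
    then have "tail_integral (trunc Q N) (1 - s) \<le> tail_integral (trunc Q (Suc N)) (1 - s)"
      unfolding tail_integral_def using \<open>s \<le> 1\<close>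
      by (intro integral_mono L2_01_integrable_tail) (auto simp: indicator_def trunc_mono)
    then show ?thesis unfolding AQ_pos_eq[OF \<open>0 < s\<close> \<open>s \<le> 1\<close>] using \<open>0 < s\<close> by (simp add: divide_right_mono)
  qed
qed

lemma AQ_trunc_tendsto:
  assumes "Q \<in> QSet" and s: "s \<in> {0..1}"
  shows "(\<lambda>N. AQ (trunc Q N) s) \<longlonglongrightarrow> AQ Q s"
proof (cases "s = 0")
  case True
  have "(\<Squnion>N. ereal (trunc Q N t)) = ereal (Q t)" for t
    using trunc_tendsto[of Q t] by (intro LIMSEQ_unique[OF LIMSEQ_SUP] incseq_SucI) (auto simp: trunc_mono)
  have "(\<Squnion>N. AQ (trunc Q N) 0) = (\<Squnion>N. \<Squnion>t\<in>{0..<1}. ereal (trunc Q N t))" unfolding AQ_def by simp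
  also have "\<dots> = (\<Squnion>t\<in>{0..<1}. \<Squnion>N. ereal (trunc Q N t))" by (rule SUP_commute)
  also have "\<dots> = AQ Q 0" unfolding AQ_def using \<open>\<And>t. (\<Squnion>N. ereal (trunc Q N t)) = ereal (Q t)\<close> by simp
  finally have "(\<Squnion>N. AQ (trunc Q N) 0) = AQ Q 0" .
  then show ?thesis using True LIMSEQ_SUP[OF AQ_trunc_incseq[OF assms]] by simp
next
  case False
  then have "0 < s" "s \<le> 1" using s by auto
  then show ?thesis unfolding AQ_pos_eq[OF \<open>0 < s\<close> \<open>s \<le> 1\<close>]
    by (intro tendsto_intros tail_integral_trunc_tendsto assms(1)) simp
qed

lemma AQ_ind_trunc:
  assumes "Q \<in> QSet"
  shows "incseq (\<lambda>N. AQ_ind (trunc Q N) s)" and "(\<lambda>N. AQ_ind (trunc Q N) s) \<longlonglongrightarrow> AQ_ind Q s"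
  using AQ_trunc_incseq[OF assms] AQ_trunc_tendsto[OF assms] by (auto simp: AQ_ind_def incseq_def)

lemma AQ_ind_bdd_incr: "bdd_incr Q B \<Longrightarrow> AQ_ind Q = (\<lambda>s. ereal (indicator {0..1} s * avg_tail Q (clamp01 s)))"
  unfolding AQ_ind_def by (auto simp: fun_eq_iff AQ_eq_avg_tail clamp01_id indicator_def)

lemma AQ_ind_bdd_incr_measurable: "bdd_incr Q B \<Longrightarrow> AQ_ind Q \<in> borel_measurable borel"
  unfolding AQ_ind_bdd_incr
  using borel_measurable_clamp01_comp[OF continuous_on_avg_tail] by measurable

lemma AQ_ind_measurable:
  assumes "Q \<in> QSet"
  shows "AQ_ind Q \<in> borel_measurable borel"
proof -
  have "AQ_ind Q = (\<lambda>s. \<Squnion>N. AQ_ind (trunc Q N) s)"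
    using LIMSEQ_unique[OF AQ_ind_trunc(2)[OF assms] LIMSEQ_SUP[OF AQ_ind_trunc(1)[OF assms]]] by auto
  then show ?thesis using AQ_ind_bdd_incr_measurable[OF trunc_bdd_incr[OF assms]] by simp
qed

lemma AQ_ind_lower_bound:
  assumes "Q \<in> QSet"
  shows "- ereal \<bar>Q 0\<bar> \<le> AQ_ind (trunc Q N) s" and "- ereal \<bar>Q 0\<bar> \<le> AQ_ind Q s"
proof -
  have n0: "bdd_incr (trunc Q 0) \<bar>Q 0\<bar>" using trunc_bdd_incr[OF assms, of 0] by simp
  have "- ereal \<bar>Q 0\<bar> \<le> AQ_ind (trunc Q 0) s"
    using avg_tail_bound[OF n0, of s] by (auto simp: AQ_ind_def AQ_eq_avg_tail[OF n0])
  then show "- ereal \<bar>Q 0\<bar> \<le> AQ_ind (trunc Q N) s" and "- ereal \<bar>Q 0\<bar> \<le> AQ_ind Q s"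
    using incseq_le[OF AQ_ind_trunc[OF assms]] AQ_ind_trunc(1)[OF assms]
    by (auto simp: incseq_def intro: order.trans)
qed

text \<open>Monotone convergence, after shifting the integrands \<^term>\<open>AQ_ind (trunc Q N)\<close> by the common lower
  bound \<open>\<bar>Q 0\<bar>\<close>.\<close>
lemma ereal_integral_AQ_ind_trunc_tendsto:
  assumes Q: "Q \<in> QSet" and m: "m \<in> M1Set"
  shows "(\<lambda>N. ereal_integral m (AQ_ind (trunc Q N))) \<longlonglongrightarrow> ereal_integral m (AQ_ind Q)"
proof -
  define B where "B = \<bar>Q 0\<bar>"
  have meas_eq: "borel_measurable m = borel_measurable borel"
    using M1Set_D(2)[OF m] by (intro measurable_cong_sets) auto
  have meas_N: "AQ_ind (trunc Q N) \<in> borel_measurable m" for N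
    unfolding meas_eq using AQ_ind_bdd_incr_measurable[OF trunc_bdd_incr[OF Q]] .
  have meas: "AQ_ind Q \<in> borel_measurable m" unfolding meas_eq using AQ_ind_measurable[OF Q] .
  define G where "G N x = e2ennreal (AQ_ind (trunc Q N) x + ereal B)" for N x
  have "incseq G"
    unfolding G_def using AQ_ind_trunc(1)[OF Q]
    by (intro incseq_SucI le_funI e2ennreal_mono add_right_mono) (auto simp: incseq_def)
  moreover have "G N \<in> borel_measurable m" for N unfolding G_def using meas_N[of N] by measurable
  moreover have "(\<lambda>N. G N x) \<longlonglongrightarrow> e2ennreal (AQ_ind Q x + ereal B)" for x
    unfolding G_def by (intro tendsto_e2ennrealI tendsto_add_ereal_general1 AQ_ind_trunc(2)[OF Q]) auto
  ultimately have "(\<lambda>N. \<integral>\<^sup>+x. G N x \<partial>m) \<longlonglongrightarrow> (\<integral>\<^sup>+x. e2ennreal (AQ_ind Q x + ereal B) \<partial>m)"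
    by (rule nn_integral_LIMSEQ)
  then have "(\<lambda>N. enn2ereal (\<integral>\<^sup>+x. G N x \<partial>m) - ereal B) \<longlonglongrightarrow> enn2ereal (\<integral>\<^sup>+x. e2ennreal (AQ_ind Q x + ereal B) \<partial>m) - ereal B"
    by (intro tendsto_diff_ereal_general tendsto_enn2erealI) auto
  moreover have "ereal_integral m (AQ_ind (trunc Q N)) = enn2ereal (\<integral>\<^sup>+x. G N x \<partial>m) - ereal B" for N
    unfolding G_def B_def using M1Set_D(1)[OF m] meas_N AQ_ind_lower_bound(1)[OF Q] by (intro ereal_integral_shift) auto
  moreover have "ereal_integral m (AQ_ind Q) = enn2ereal (\<integral>\<^sup>+x. e2ennreal (AQ_ind Q x + ereal B) \<partial>m) - ereal B"
    unfolding B_def using M1Set_D(1)[OF m] meas AQ_ind_lower_bound(2)[OF Q] by (intro ereal_integral_shift) auto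
  ultimately show ?thesis by simp
qed

section \<open>The minimax equality\<close>

lemma Kfun_eq_Jfun:
  "Kfun P \<rho> X0 Q m \<mu> \<beta> lam = ereal (Jfun \<beta> lam (\<lambda>s. quantile P \<rho> (1 - s)) Q)
     - ereal \<mu> * ereal_integral m (AQ_ind Q) + ereal \<mu> * ereal_integral m (AQ_ind (quantile P X0))"
  unfolding Kfun_def Jfun_def AQ_ind_def ..

lemma Kfun_trunc_tendsto:
  assumes "Q \<in> QSet" and "m \<in> M1Set" and "L2_01 (\<lambda>s. quantile P \<rho> (1 - s))"
    and "bdd_incr (quantile P X0) C"
  shows "(\<lambda>N. Kfun P \<rho> X0 (trunc Q N) m \<mu> \<beta> lam) \<longlonglongrightarrow> Kfun P \<rho> X0 Q m \<mu> \<beta> lam"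
proof -
  have "(\<lambda>N. ereal (Jfun \<beta> lam (\<lambda>s. quantile P \<rho> (1 - s)) (trunc Q N))) \<longlonglongrightarrow> ereal (Jfun \<beta> lam (\<lambda>s. quantile P \<rho> (1 - s)) Q)"
    using Jfun_truncation_tendsto[OF QSet_L2_01[OF assms(1)] assms(3)] unfolding trunc_def[abs_def]
    by (intro tendsto_ereal)
  moreover have "(\<lambda>N. ereal \<mu> * ereal_integral m (AQ_ind (trunc Q N))) \<longlonglongrightarrow> ereal \<mu> * ereal_integral m (AQ_ind Q)"
    by (intro tendsto_cmult_ereal ereal_integral_AQ_ind_trunc_tendsto assms) auto
  moreover have "ereal_integral m (AQ_ind (quantile P X0)) = ereal (unit_integral (avg_tail (quantile P X0)) m)"
    using ereal_integral_AQ_bdd_incr[OF assms(4,2)] unfolding AQ_ind_def[abs_def] .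
  ultimately show ?thesis unfolding Kfun_eq_Jfun
    by (intro tendsto_add_ereal_general1 tendsto_diff_ereal_general tendsto_const) auto
qed

definition QSet_bdd :: "(real \<Rightarrow> real) set" where
  "QSet_bdd = {Q \<in> QSet. \<exists>B. bdd_incr Q B}"

lemma trunc_QSet_bdd: "Q \<in> QSet \<Longrightarrow> trunc Q N \<in> QSet_bdd"
  unfolding QSet_bdd_def using trunc_QSet trunc_bdd_incr by blast

lemma zero_QSet_bdd: "(\<lambda>_. 0) \<in> QSet_bdd"
proof -
  have "bdd_incr (\<lambda>_. 0) 0" unfolding bdd_incr_def by (auto intro: mono_onI)
  then show ?thesis unfolding QSet_bdd_def by (auto intro: bdd_incr_QSet)
qed

lemma QSet_bdd_convex:
  assumes "Q1 \<in> QSet_bdd" and "Q2 \<in> QSet_bdd" and t: "t \<in> {0..1}"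
  shows "(\<lambda>s. t * Q1 s + (1 - t) * Q2 s) \<in> QSet_bdd"
proof -
  obtain B1 B2 where "bdd_incr Q1 B1" "bdd_incr Q2 B2" and "Q1 \<in> QSet" "Q2 \<in> QSet"
    using assms unfolding QSet_bdd_def by auto
  moreover have "0 \<le> t" "0 \<le> 1 - t" using t by auto
  ultimately have bdd: "bdd_incr (\<lambda>s. t * Q1 s + (1 - t) * Q2 s) (t * B1 + (1 - t) * B2)"
    by (intro bdd_incr_lin)
  have "continuous (at_right x) (\<lambda>s. t * Q1 s + (1 - t) * Q2 s)" if "x \<in> {0..<1}" for x
    using \<open>Q1 \<in> QSet\<close> \<open>Q2 \<in> QSet\<close> that unfolding QSet_iff by (auto intro!: continuous_intros)
  then have "(\<lambda>s. t * Q1 s + (1 - t) * Q2 s) \<in> QSet" by (rule bdd_incr_QSet[OF bdd])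
  then show ?thesis unfolding QSet_bdd_def using bdd by auto
qed

text \<open>Bounded quantile functions suffice: truncating \<open>Q\<close> at level \<open>N\<close> gives \<open>K\<close>-values converging to
  that of \<open>Q\<close>.\<close>
lemma INF_Kfun_QSet_bdd:
  assumes "m \<in> M1Set" and "L2_01 (\<lambda>s. quantile P \<rho> (1 - s))" and "bdd_incr (quantile P X0) C"
  shows "(INF Q\<in>QSet. Kfun P \<rho> X0 Q m \<mu> \<beta> lam) = (INF Q\<in>QSet_bdd. Kfun P \<rho> X0 Q m \<mu> \<beta> lam)"
proof (rule antisym)
  show "(INF Q\<in>QSet. Kfun P \<rho> X0 Q m \<mu> \<beta> lam) \<le> (INF Q\<in>QSet_bdd. Kfun P \<rho> X0 Q m \<mu> \<beta> lam)"
    by (rule INF_superset_mono) (auto simp: QSet_bdd_def)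
  show "(INF Q\<in>QSet_bdd. Kfun P \<rho> X0 Q m \<mu> \<beta> lam) \<le> (INF Q\<in>QSet. Kfun P \<rho> X0 Q m \<mu> \<beta> lam)"
  proof (rule INF_greatest)
    fix Q assume "Q \<in> QSet"
    show "(INF Q\<in>QSet_bdd. Kfun P \<rho> X0 Q m \<mu> \<beta> lam) \<le> Kfun P \<rho> X0 Q m \<mu> \<beta> lam"
      using \<open>Q \<in> QSet\<close> trunc_QSet_bdd
      by (intro tendsto_lowerbound[OF Kfun_trunc_tendsto[OF \<open>Q \<in> QSet\<close> assms]] always_eventually allI INF_lower)
        auto
  qed
qed

lemma SUP_INF_le_INF_SUP:
  fixes f :: "'a \<Rightarrow> 'b \<Rightarrow> 'c::complete_lattice"
  shows "(SUP y\<in>B. INF x\<in>A. f x y) \<le> (INF x\<in>A. SUP y\<in>B. f x y)"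
  by (intro SUP_least INF_greatest) (metis INF_lower SUP_upper order_trans)

locale Kfun_minimax =
  fixes P :: "'a measure" and \<rho> X0 :: "'a \<Rightarrow> real" and C \<beta> lam \<mu> :: real
  assumes prob_space_P: "prob_space P"
    and \<rho>_measurable: "\<rho> \<in> borel_measurable P" and \<rho>_square_integrable: "integrable P (\<lambda>\<omega>. (\<rho> \<omega>)\<^sup>2)"
    and X0_measurable: "X0 \<in> borel_measurable P" and X0_bounded: "AE \<omega> in P. \<bar>X0 \<omega>\<bar> \<le> C"
begin

abbreviation K :: "(real \<Rightarrow> real) \<Rightarrow> real measure \<Rightarrow> ereal" where
  "K Q m \<equiv> Kfun P \<rho> X0 Q m \<mu> \<beta> lam"

definition F :: "(real \<Rightarrow> real) \<Rightarrow> real measure \<Rightarrow> real" where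
  "F Q m = Jfun \<beta> lam (\<lambda>s. quantile P \<rho> (1 - s)) Q
     - \<mu> * unit_integral (avg_tail Q) m + \<mu> * unit_integral (avg_tail (quantile P X0)) m"

definition F_moment :: "(real \<Rightarrow> real) \<Rightarrow> (nat \<Rightarrow> real) \<Rightarrow> real" where
  "F_moment Q y = F Q (moment_rep y)"

lemma L2_01_reflected_quantile_\<rho>: "L2_01 (\<lambda>s. quantile P \<rho> (1 - s))"
  using quantile_L2_01[OF prob_space_P \<rho>_measurable \<rho>_square_integrable] by (rule L2_01_reflect)

lemma bdd_incr_quantile_X0: "bdd_incr (quantile P X0) C"
  by (rule quantile_bdd_incr[OF prob_space_P X0_measurable X0_bounded])

lemma K_eq_F:
  assumes "Q \<in> QSet_bdd" and "m \<in> M1Set"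
  shows "K Q m = ereal (F Q m)"
proof -
  obtain B where "bdd_incr Q B" using assms(1) unfolding QSet_bdd_def by auto
  then show ?thesis unfolding Kfun_eq_Jfun F_def AQ_ind_def[abs_def]
    using ereal_integral_AQ_bdd_incr[OF _ assms(2)] bdd_incr_quantile_X0 by simp
qed

lemma INF_K_QSet_bdd: "m \<in> M1Set \<Longrightarrow> (INF Q\<in>QSet. K Q m) = (INF Q\<in>QSet_bdd. K Q m)"
  using INF_Kfun_QSet_bdd L2_01_reflected_quantile_\<rho> bdd_incr_quantile_X0 by blast

lemma F_moment_moments:
  assumes "Q \<in> QSet_bdd" and "m \<in> M1Set"
  shows "F_moment Q (moments m) = F Q m"
proof -
  obtain B where "bdd_incr Q B" using assms(1) unfolding QSet_bdd_def by auto
  then show ?thesis unfolding F_moment_def F_def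
    using unit_integral_moment_rep[OF continuous_on_avg_tail assms(2)] bdd_incr_quantile_X0 by simp
qed

lemma F_moment_continuous_affine:
  assumes "Q \<in> QSet_bdd"
  shows "continuous_on moment_space (F_moment Q)" and "mix_affine mix_seq moment_space (F_moment Q)"
proof -
  obtain B where "bdd_incr Q B" using assms unfolding QSet_bdd_def by auto
  note cont = continuous_on_avg_tail[OF this] continuous_on_avg_tail[OF bdd_incr_quantile_X0]
  show "continuous_on moment_space (F_moment Q)" unfolding F_moment_def[abs_def] F_def
    using continuous_on_unit_integral_moment_rep[OF cont(1)] continuous_on_unit_integral_moment_rep[OF cont(2)]
    by (intro continuous_intros)
  show "mix_affine mix_seq moment_space (F_moment Q)"
    unfolding mix_affine_def
  proof (intro ballI)
    fix x y t assume xyt: "x \<in> moment_space" "y \<in> moment_space" "t \<in> {0..1::real}"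
    note affine = mix_affine_unit_integral_moment_rep[OF cont(1)] mix_affine_unit_integral_moment_rep[OF cont(2)]
    show "F_moment Q (mix_seq t x y) = t * F_moment Q x + (1 - t) * F_moment Q y"
      unfolding F_moment_def F_def affine(1)[unfolded mix_affine_def, rule_format, OF xyt]
        affine(2)[unfolded mix_affine_def, rule_format, OF xyt]
      by (simp add: algebra_simps)
  qed
qed

text \<open>\<open>F\<close> is convex in \<open>Q\<close>: \<^const>\<open>Jfun\<close> is convex and \<open>Q \<mapsto> A\<^sub>Q\<close> is linear.\<close>
lemma F_moment_convex:
  assumes Q1: "Q1 \<in> QSet_bdd" and Q2: "Q2 \<in> QSet_bdd" and t: "t \<in> {0..1}" and y: "y \<in> moment_space"
  shows "F_moment (\<lambda>s. t * Q1 s + (1 - t) * Q2 s) y \<le> t * F_moment Q1 y + (1 - t) * F_moment Q2 y"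
proof -
  obtain B1 B2 where "bdd_incr Q1 B1" "bdd_incr Q2 B2" using assms unfolding QSet_bdd_def by auto
  moreover have m: "moment_rep y \<in> M1Set" using moment_rep[OF y] by simp
  moreover have "0 \<le> t" "0 \<le> 1 - t" using t by auto
  ultimately have "avg_tail (\<lambda>s. t * Q1 s + (1 - t) * Q2 s) (clamp01 x)
      = t * avg_tail Q1 (clamp01 x) + (1 - t) * avg_tail Q2 (clamp01 x)" for x
    using clamp01_in by (intro avg_tail_lin)
  then have linear: "unit_integral (avg_tail (\<lambda>s. t * Q1 s + (1 - t) * Q2 s)) (moment_rep y)
      = t * unit_integral (avg_tail Q1) (moment_rep y) + (1 - t) * unit_integral (avg_tail Q2) (moment_rep y)"
    using integrable_clamp01_comp[OF continuous_on_avg_tail m] \<open>bdd_incr Q1 B1\<close> \<open>bdd_incr Q2 B2\<close>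
    unfolding unit_integral_def by simp
  have convex: "Jfun \<beta> lam (\<lambda>s. quantile P \<rho> (1 - s)) (\<lambda>s. t * Q1 s + (1 - t) * Q2 s)
      \<le> t * Jfun \<beta> lam (\<lambda>s. quantile P \<rho> (1 - s)) Q1 + (1 - t) * Jfun \<beta> lam (\<lambda>s. quantile P \<rho> (1 - s)) Q2"
    using Q1 Q2 by (intro Jfun_convex[OF QSet_L2_01 QSet_L2_01 L2_01_reflected_quantile_\<rho> t]) (auto simp: QSet_bdd_def)
  have "J \<le> t * J1 + (1 - t) * J2 \<Longrightarrow>
      J - \<mu> * (t * a1 + (1 - t) * a2) + \<mu> * b \<le> t * (J1 - \<mu> * a1 + \<mu> * b) + (1 - t) * (J2 - \<mu> * a2 + \<mu> * b)"
    for J J1 J2 a1 a2 b :: real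
    by (simp add: algebra_simps)
  from this[OF convex] show ?thesis unfolding F_moment_def F_def linear .
qed

lemma SUP_K_le_F_moment:
  assumes "Q \<in> QSet_bdd"
  obtains y where "y \<in> moment_space" and "(SUP m\<in>M1Set. K Q m) \<le> ereal (F_moment Q y)"
proof -
  obtain y where "y \<in> moment_space" and max: "\<And>y'. y' \<in> moment_space \<Longrightarrow> F_moment Q y' \<le> F_moment Q y"
    using continuous_attains_sup[OF compact_moment_space moment_space_nonempty F_moment_continuous_affine(1)[OF assms]]
    by blast
  have "K Q m \<le> ereal (F_moment Q y)" if "m \<in> M1Set" for m
    using max[of "moments m"] that assms K_eq_F F_moment_moments unfolding moment_space_def by auto
  then show ?thesis using that \<open>y \<in> moment_space\<close> by (meson SUP_least)
qed

text \<open>Ky Fan's theorem on the compact convex set of moment sequences: a level \<open>c\<close> below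
  \<open>sup\<^sub>m K(Q, m)\<close> for every bounded \<open>Q\<close> is reached by \<open>K(Q, m\<^sub>1)\<close> for all \<open>Q\<close> at once.\<close>
lemma common_level_K:
  assumes level: "\<And>Q. Q \<in> QSet_bdd \<Longrightarrow> ereal c \<le> (SUP m\<in>M1Set. K Q m)"
  shows "\<exists>m1\<in>M1Set. ereal c \<le> (INF Q\<in>QSet. K Q m1)"
proof -
  have "\<exists>y\<in>moment_space. \<forall>\<phi>\<in>F_moment ` QSet_bdd. c \<le> \<phi> y"
  proof (rule ky_fan_common_level[OF compact_moment_space moment_space_nonempty moment_space_mix_closed])
    show "continuous_on moment_space \<phi> \<and> mix_affine mix_seq moment_space \<phi>" if "\<phi> \<in> F_moment ` QSet_bdd" for \<phi>
      using that F_moment_continuous_affine by auto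
    show "\<exists>\<phi>\<in>F_moment ` QSet_bdd. \<forall>y\<in>moment_space. \<phi> y \<le> t * \<phi>1 y + (1 - t) * \<phi>2 y"
      if "\<phi>1 \<in> F_moment ` QSet_bdd" "\<phi>2 \<in> F_moment ` QSet_bdd" "t \<in> {0..1}" for \<phi>1 \<phi>2 t
      using that F_moment_convex QSet_bdd_convex by blast
    show "\<exists>y\<in>moment_space. c \<le> \<phi> y" if \<phi>: "\<phi> \<in> F_moment ` QSet_bdd" for \<phi>
    proof -
      obtain Q where Q: "Q \<in> QSet_bdd" "\<phi> = F_moment Q" using \<phi> by auto
      then obtain y where "y \<in> moment_space" and "(SUP m\<in>M1Set. K Q m) \<le> ereal (F_moment Q y)"
        using SUP_K_le_F_moment by blast
      then have "c \<le> F_moment Q y" using level[OF Q(1)] by (metis ereal_less_eq(3) order.trans)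
      then show ?thesis using Q(2) \<open>y \<in> moment_space\<close> by auto
    qed
  qed
  then obtain y1 where "y1 \<in> moment_space" and y1: "\<And>Q. Q \<in> QSet_bdd \<Longrightarrow> c \<le> F_moment Q y1" by auto
  define m1 where "m1 = moment_rep y1"
  have "m1 \<in> M1Set" unfolding m1_def using moment_rep[OF \<open>y1 \<in> moment_space\<close>] by simp
  moreover have "ereal c \<le> (INF Q\<in>QSet_bdd. K Q m1)"
    using y1 K_eq_F[OF _ \<open>m1 \<in> M1Set\<close>] unfolding F_moment_def m1_def[symmetric] by (auto intro: INF_greatest)
  ultimately show ?thesis using INF_K_QSet_bdd by auto
qed

lemma upper_value_le_INF_K:
  "\<exists>m1\<in>M1Set. (INF Q\<in>QSet. SUP m\<in>M1Set. K Q m) \<le> (INF Q\<in>QSet. K Q m1)"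
proof -
  define V where "V = (INF Q\<in>QSet. SUP m\<in>M1Set. K Q m)"
  obtain y where "(SUP m\<in>M1Set. K (\<lambda>_. 0) m) \<le> ereal (F_moment (\<lambda>_. 0) y)"
    using SUP_K_le_F_moment[OF zero_QSet_bdd] by blast
  moreover have "V \<le> (SUP m\<in>M1Set. K (\<lambda>_. 0) m)"
    unfolding V_def using zero_QSet_bdd by (intro INF_lower) (auto simp: QSet_bdd_def)
  ultimately consider "V = - \<infinity>" | c where "V = ereal c" by (cases V) auto
  then show ?thesis
  proof cases
    case 1
    then show ?thesis unfolding V_def using M1Set_return_0 by auto
  next
    case (2 c)
    have "ereal c \<le> (SUP m\<in>M1Set. K Q m)" if "Q \<in> QSet_bdd" for Q
      unfolding 2[symmetric] V_def using that by (intro INF_lower) (auto simp: QSet_bdd_def)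
    then show ?thesis unfolding V_def[symmetric] 2 by (rule common_level_K)
  qed
qed

theorem minimax:
  "\<exists>m1\<in>M1Set. (INF Q\<in>QSet. K Q m1) = (SUP m\<in>M1Set. INF Q\<in>QSet. K Q m)
     \<and> (SUP m\<in>M1Set. INF Q\<in>QSet. K Q m) = (INF Q\<in>QSet. SUP m\<in>M1Set. K Q m)"
proof -
  obtain m1 where "m1 \<in> M1Set" and "(INF Q\<in>QSet. SUP m\<in>M1Set. K Q m) \<le> (INF Q\<in>QSet. K Q m1)"
    using upper_value_le_INF_K by blast
  moreover have "(INF Q\<in>QSet. K Q m1) \<le> (SUP m\<in>M1Set. INF Q\<in>QSet. K Q m)"
    using \<open>m1 \<in> M1Set\<close> by (rule SUP_upper)
  moreover note SUP_INF_le_INF_SUP[where f = "\<lambda>Q m. K Q m" and A = QSet and B = M1Set]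
  ultimately show ?thesis by (intro bexI[of _ m1]) auto
qed

end

theorem lemmaB2:
  fixes P :: "'a measure" and \<rho> X0 :: "'a \<Rightarrow> real"
  assumes "prob_space P" and "complete_measure P" and "nonatomic P"
    and "\<rho> \<in> borel_measurable P" and "integrable P (\<lambda>\<omega>. (\<rho> \<omega>)\<^sup>2)"
    and "AE \<omega> in P. \<rho> \<omega> > 0"
    and "prob_space.variance P \<rho> > 0"
    and "X0 \<in> borel_measurable P" and "\<exists>C. AE \<omega> in P. \<bar>X0 \<omega>\<bar> \<le> C"
  shows "\<forall>\<beta>::real. \<forall>lam::real. \<forall>\<mu>::real. lam \<ge> 0 \<longrightarrow> \<mu> \<ge> 0 \<longrightarrow>
    (\<exists>m1\<in>M1Set.
       (INF Q\<in>QSet. Kfun P \<rho> X0 Q m1 \<mu> \<beta> lam)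
         = (SUP m\<in>M1Set. INF Q\<in>QSet. Kfun P \<rho> X0 Q m \<mu> \<beta> lam)
     \<and> (SUP m\<in>M1Set. INF Q\<in>QSet. Kfun P \<rho> X0 Q m \<mu> \<beta> lam)
         = (INF Q\<in>QSet. SUP m\<in>M1Set. Kfun P \<rho> X0 Q m \<mu> \<beta> lam))"
proof (intro allI impI)
  fix \<beta> lam \<mu> :: real
  obtain C where "AE \<omega> in P. \<bar>X0 \<omega>\<bar> \<le> C" using assms(9) by blast
  then interpret Kfun_minimax P \<rho> X0 C \<beta> lam \<mu>
    using assms(1,4,5,8) by (simp add: Kfun_minimax_def)
  show "\<exists>m1\<in>M1Set.
       (INF Q\<in>QSet. Kfun P \<rho> X0 Q m1 \<mu> \<beta> lam) = (SUP m\<in>M1Set. INF Q\<in>QSet. Kfun P \<rho> X0 Q m \<mu> \<beta> lam)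
     \<and> (SUP m\<in>M1Set. INF Q\<in>QSet. Kfun P \<rho> X0 Q m \<mu> \<beta> lam) = (INF Q\<in>QSet. SUP m\<in>M1Set. Kfun P \<rho> X0 Q m \<mu> \<beta> lam)"
    by (rule minimax)
qed

end
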